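(* Let $\alpha\ge4$. Then the Energy Distance $\mathcal{E}_\alpha$ is sub-additive by convex convolution: for every $\lambda\in(0,1)$ and all random vectors $X_1,X_2,Y_1,Y_2$ in $\mathbb{R}^n$ with $X_1$ independent of $X_2$ and $Y_1$ independent of $Y_2$ (such that all Energy Distances below are well defined), $$\mathcal{E}_\alpha(\sqrt{\lambda}X_1+\sqrt{1-\lambda}X_2,\sqrt{\lambda}Y_1+\sqrt{1-\lambda}Y_2)\le\sqrt{\lambda}\,\mathcal{E}_\alpha(X_1,Y_1)+\sqrt{1-\lambda}\,\mathcal{E}_\alpha(X_2,Y_2).$$
   Context: Random vectors are identified with their laws. For $\alpha>0$ and probability measures $\mu,\nu$ on $\mathbb{R}^n$ having equal moments up to some order $l\ge\lfloor\alpha/2\rfloor$, the Energy Distance $\mathcal{E}_\alpha(\mu,\nu)\ge0$ is defined by $(-1)^k\mathcal{E}_\alpha(\mu,\nu)^2=2\int_{\mathbb{R}^{2n}}|x-y|^\alpha d\mu(x)d\nu(y)-\int_{\mathbb{R}^{2n}}|x-y|^\alpha d\mu(x)d\mu(y)-\int_{\mathbb{R}^{2n}}|x-y|^\alpha d\nu(x)d\nu(y)$, where $k=\lfloor\alpha/2\rfloor$ and $|\cdot|$ is the Euclidean norm; it is well defined when these integrals are finite and the resulting value of $\mathcal{E}_\alpha^2$ is nonnegative. *)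

theory Defs
  imports "HOL-Probability.Probability"
begin

text \<open>Probability laws on R^n are modelled as measures on a Euclidean space 'a
  (whose norm is the Euclidean norm). A multi-index is a function
  beta :: 'a => nat on the basis vectors.\<close>

definition monomial :: "('a::euclidean_space \<Rightarrow> nat) \<Rightarrow> 'a \<Rightarrow> real" where
  "monomial \<beta> x = (\<Prod>b\<in>Basis. (x \<bullet> b) ^ (\<beta> b))"

definition equal_moments_upto :: "nat \<Rightarrow> 'a::euclidean_space measure \<Rightarrow> 'a measure \<Rightarrow> bool" where
  "equal_moments_upto l \<mu> \<nu> \<longleftrightarrow>
     (\<forall>\<beta>. (\<Sum>b\<in>Basis. \<beta> b) \<le> l \<longrightarrow>
        integrable \<mu> (monomial \<beta>) \<and> integrable \<nu> (monomial \<beta>) \<and>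
        (\<integral>x. monomial \<beta> x \<partial>\<mu>) = (\<integral>x. monomial \<beta> x \<partial>\<nu>))"

definition energy_kernel :: "real \<Rightarrow> 'a::euclidean_space \<times> 'a \<Rightarrow> real" where
  "energy_kernel \<alpha> p = norm (fst p - snd p) powr \<alpha>"

definition energy_int :: "real \<Rightarrow> 'a::euclidean_space measure \<Rightarrow> 'a measure \<Rightarrow> real" where
  "energy_int \<alpha> \<mu> \<nu> = (\<integral>p. energy_kernel \<alpha> p \<partial>(\<mu> \<Otimes>\<^sub>M \<nu>))"

definition energy_sq :: "real \<Rightarrow> 'a::euclidean_space measure \<Rightarrow> 'a measure \<Rightarrow> real" where
  "energy_sq \<alpha> \<mu> \<nu> = (-1) ^ nat \<lfloor>\<alpha> / 2\<rfloor> *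
     (2 * energy_int \<alpha> \<mu> \<nu> - energy_int \<alpha> \<mu> \<mu> - energy_int \<alpha> \<nu> \<nu>)"

definition energy_dist :: "real \<Rightarrow> 'a::euclidean_space measure \<Rightarrow> 'a measure \<Rightarrow> real" where
  "energy_dist \<alpha> \<mu> \<nu> = sqrt (energy_sq \<alpha> \<mu> \<nu>)"

definition energy_well_defined :: "real \<Rightarrow> 'a::euclidean_space measure \<Rightarrow> 'a measure \<Rightarrow> bool" where
  "energy_well_defined \<alpha> \<mu> \<nu> \<longleftrightarrow>
     prob_space \<mu> \<and> prob_space \<nu> \<and> sets \<mu> = sets borel \<and> sets \<nu> = sets borel \<and>
     (\<exists>l. l \<ge> nat \<lfloor>\<alpha> / 2\<rfloor> \<and> equal_moments_upto l \<mu> \<nu>) \<and>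
     integrable (\<mu> \<Otimes>\<^sub>M \<nu>) (energy_kernel \<alpha>) \<and>
     integrable (\<mu> \<Otimes>\<^sub>M \<mu>) (energy_kernel \<alpha>) \<and>
     integrable (\<nu> \<Otimes>\<^sub>M \<nu>) (energy_kernel \<alpha>) \<and>
     energy_sq \<alpha> \<mu> \<nu> \<ge> 0"

text \<open>Law of sqrt(lambda) X1 + sqrt(1-lambda) X2 for independent X1 ~ mu1, X2 ~ mu2.\<close>
definition conv_comb :: "real \<Rightarrow> 'a::euclidean_space measure \<Rightarrow> 'a measure \<Rightarrow> 'a measure" where
  "conv_comb lam \<mu>1 \<mu>2 = distr (\<mu>1 \<Otimes>\<^sub>M \<mu>2) borel
      (\<lambda>(x, y). sqrt lam *\<^sub>R x + sqrt (1 - lam) *\<^sub>R y)"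

end

(*
  Let k = nat (floor (alpha / 2)). The kernel (-1)^(k+1) |x - y|^alpha is conditionally positive
  definite of order k: if a signed combination sum_i c_i P_i of laws annihilates every polynomial
  of degree at most k, then (-1)^(k+1) sum_(i,j) c_i c_j E|X_i - Y_j|^alpha >= 0, with X_i ~ P_i and
  Y_j ~ P_j independent. For alpha = 2k the form even vanishes, because |x - y|^(2k) is a sum of
  products p(x) q(y) with deg p + deg q = 2k. For k < alpha/2 < k + 1, |x - y|^alpha is a positive
  multiple of the integral over s > 0 of s^(-1-alpha/2) R(s |x - y|^2), where R is the
  sign-corrected Taylor remainder of order k of exp(-u); the Taylor polynomial only produces even
  powers |x - y|^(2l) with l <= k, which cancel, and the Gaussian kernels that remain are positive
  definite, as one sees by expanding exp(2 s x.y) in powers of x.y.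

  Hence the energy distance is a seminorm on differences of laws with equal moments up to order k,
  which yields the Cauchy-Schwarz and triangle inequalities. With A, C, B the laws of
  sqrt(lam) X1 + sqrt(1-lam) X2, sqrt(lam) Y1 + sqrt(1-lam) X2 and sqrt(lam) Y1 + sqrt(1-lam) Y2,
  conditioning on the common component X2 and applying Cauchy-Schwarz to the conditional laws gives
  E(A,C)^2 <= lam^(alpha/2) E(X1,Y1)^2, and symmetrically E(C,B)^2 <= (1-lam)^(alpha/2) E(X2,Y2)^2.
  Since alpha >= 2, lam^(alpha/4) <= sqrt(lam), and the triangle inequality through C concludes.
*)
theory Submission
  imports Defs
begin

section \<open>Polynomial functions on Euclidean space\<close>

definition total_degree :: "('a::euclidean_space \<Rightarrow> nat) \<Rightarrow> nat" where
  "total_degree \<beta> = (\<Sum>b\<in>(Basis::'a set). \<beta> b)"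

definition mpoly_deg_le :: "nat \<Rightarrow> ('a::euclidean_space \<Rightarrow> real) \<Rightarrow> bool" where
  "mpoly_deg_le d p \<longleftrightarrow> (\<exists>F c. finite F \<and> (\<forall>\<beta>\<in>F. total_degree \<beta> \<le> d) \<and>
      (\<forall>x. p x = (\<Sum>\<beta>\<in>F. c \<beta> * monomial \<beta> x)))"

lemma mpoly_deg_leE:
  assumes "mpoly_deg_le d p"
  obtains F c where "finite F" "\<And>\<beta>. \<beta> \<in> F \<Longrightarrow> total_degree \<beta> \<le> d"
    "\<And>x. p x = (\<Sum>\<beta>\<in>F. c \<beta> * monomial \<beta> x)"
  using assms unfolding mpoly_deg_le_def by blast

lemma mpoly_deg_leI:
  fixes B :: "'i \<Rightarrow> ('a::euclidean_space \<Rightarrow> nat)"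
  assumes "finite I" "\<And>i. i \<in> I \<Longrightarrow> total_degree (B i) \<le> d"
    and "\<And>x. p x = (\<Sum>i\<in>I. c i * monomial (B i) x)"
  shows "mpoly_deg_le d p"
  unfolding mpoly_deg_le_def
proof (intro exI conjI allI ballI)
  show "finite (B ` I)" using assms(1) by simp
  show "total_degree \<beta> \<le> d" if "\<beta> \<in> B ` I" for \<beta> using that assms(2) by auto
  fix x
  have "p x = (\<Sum>\<beta>\<in>B ` I. \<Sum>i\<in>{i\<in>I. B i = \<beta>}. c i * monomial (B i) x)"
    using assms(3) sum.image_gen[OF assms(1), of "\<lambda>i. c i * monomial (B i) x" B] by simp
  also have "\<dots> = (\<Sum>\<beta>\<in>B ` I. (\<Sum>i\<in>{i\<in>I. B i = \<beta>}. c i) * monomial \<beta> x)"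
    by (intro sum.cong refl) (auto simp: sum_distrib_right)
  finally show "p x = (\<Sum>\<beta>\<in>B ` I. (\<lambda>\<beta>. \<Sum>i\<in>{i\<in>I. B i = \<beta>}. c i) \<beta> * monomial \<beta> x)" .
qed

lemma monomial_mult:
  "monomial \<beta> x * monomial \<gamma> x = monomial (\<lambda>b. \<beta> b + \<gamma> b) (x::'a::euclidean_space)"
  unfolding monomial_def by (simp add: power_add prod.distrib)

lemma total_degree_add:
  "total_degree (\<lambda>b. \<beta> b + \<gamma> b) = total_degree \<beta> + total_degree (\<gamma>::'a::euclidean_space \<Rightarrow> nat)"
  unfolding total_degree_def by (simp add: sum.distrib)

lemma mpoly_deg_le_mono: "mpoly_deg_le d p \<Longrightarrow> d \<le> d' \<Longrightarrow> mpoly_deg_le d' p"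
  unfolding mpoly_deg_le_def by (meson order_trans)

lemma mpoly_deg_le_const: "mpoly_deg_le d (\<lambda>x::'a::euclidean_space. a)"
  by (rule mpoly_deg_leI[where I="{()}" and B="\<lambda>_ _. 0" and c="\<lambda>_. a"])
     (auto simp: total_degree_def monomial_def)

lemma mpoly_deg_le_monomial: "mpoly_deg_le (total_degree \<beta>) (monomial \<beta>)"
  by (rule mpoly_deg_leI[where I="{()}" and B="\<lambda>_. \<beta>" and c="\<lambda>_. 1"]) auto

lemma mpoly_deg_le_inner_Basis:
  assumes "b \<in> Basis" "1 \<le> d"
  shows "mpoly_deg_le d (\<lambda>x::'a::euclidean_space. x \<bullet> b)"
proof (rule mpoly_deg_leI[where I="{()}" and B="\<lambda>_ b'. if b' = b then 1 else 0" and c="\<lambda>_. 1"])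
  show "total_degree (\<lambda>b'. if b' = b then 1 else 0) \<le> d"
    using assms by (simp add: total_degree_def)
  fix x :: 'a
  have "monomial (\<lambda>b'. if b' = b then 1 else 0) x = (\<Prod>b'\<in>Basis. if b' = b then x \<bullet> b else 1)"
    unfolding monomial_def by (intro prod.cong) auto
  also have "\<dots> = x \<bullet> b" using assms(1) by (simp add: prod.delta)
  finally show "x \<bullet> b = (\<Sum>i\<in>{()}. 1 * monomial (\<lambda>b'. if b' = b then 1 else 0) x)" by simp
qed simp

lemma mpoly_deg_le_add:
  assumes "mpoly_deg_le d p" "mpoly_deg_le d q"
  shows "mpoly_deg_le d (\<lambda>x. p x + q x)"
proof -
  obtain F c where F: "finite F" "\<And>\<beta>. \<beta> \<in> F \<Longrightarrow> total_degree \<beta> \<le> d"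
    "\<And>x. p x = (\<Sum>\<beta>\<in>F. c \<beta> * monomial \<beta> x)"
    using assms(1) by (elim mpoly_deg_leE) blast
  obtain G e where G: "finite G" "\<And>\<beta>. \<beta> \<in> G \<Longrightarrow> total_degree \<beta> \<le> d"
    "\<And>x. q x = (\<Sum>\<beta>\<in>G. e \<beta> * monomial \<beta> x)"
    using assms(2) by (elim mpoly_deg_leE) blast
  show ?thesis
    by (rule mpoly_deg_leI[where I="F <+> G" and B="case_sum id id" and c="case_sum c e"])
       (use F G in \<open>auto simp: sum.Plus\<close>)
qed

lemma mpoly_deg_le_cmult:
  assumes "mpoly_deg_le d p"
  shows "mpoly_deg_le d (\<lambda>x. a * p x)"
proof -
  obtain F c where F: "finite F" "\<And>\<beta>. \<beta> \<in> F \<Longrightarrow> total_degree \<beta> \<le> d"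
    "\<And>x. p x = (\<Sum>\<beta>\<in>F. c \<beta> * monomial \<beta> x)"
    using assms by (elim mpoly_deg_leE) blast
  show ?thesis
    by (rule mpoly_deg_leI[where I=F and B=id and c="\<lambda>\<beta>. a * c \<beta>"])
       (use F in \<open>auto simp: sum_distrib_left mult.assoc\<close>)
qed

lemma mpoly_deg_le_mult:
  assumes "mpoly_deg_le d1 p" "mpoly_deg_le d2 q"
  shows "mpoly_deg_le (d1 + d2) (\<lambda>x. p x * q x)"
proof -
  obtain F c where F: "finite F" "\<And>\<beta>. \<beta> \<in> F \<Longrightarrow> total_degree \<beta> \<le> d1"
    "\<And>x. p x = (\<Sum>\<beta>\<in>F. c \<beta> * monomial \<beta> x)"
    using assms(1) by (elim mpoly_deg_leE) blast
  obtain G e where G: "finite G" "\<And>\<beta>. \<beta> \<in> G \<Longrightarrow> total_degree \<beta> \<le> d2"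
    "\<And>x. q x = (\<Sum>\<beta>\<in>G. e \<beta> * monomial \<beta> x)"
    using assms(2) by (elim mpoly_deg_leE) blast
  show ?thesis
  proof (rule mpoly_deg_leI[where I="F \<times> G" and B="\<lambda>(\<beta>, \<gamma>) b. \<beta> b + \<gamma> b"
        and c="\<lambda>(\<beta>, \<gamma>). c \<beta> * e \<gamma>"])
    show "total_degree ((\<lambda>(\<beta>, \<gamma>) b. \<beta> b + \<gamma> b) i) \<le> d1 + d2" if "i \<in> F \<times> G" for i
      using that F G by (auto simp: total_degree_add add_mono)
    fix x
    have "p x * q x = (\<Sum>\<beta>\<in>F. \<Sum>\<gamma>\<in>G. (c \<beta> * monomial \<beta> x) * (e \<gamma> * monomial \<gamma> x))"
      using F G by (simp add: sum_product)
    then show "p x * q x = (\<Sum>i\<in>F \<times> G. (case i of (\<beta>, \<gamma>) \<Rightarrow> c \<beta> * e \<gamma>) *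
        monomial ((\<lambda>(\<beta>, \<gamma>) b. \<beta> b + \<gamma> b) i) x)"
      by (simp add: sum.cartesian_product monomial_mult[symmetric] mult_ac case_prod_beta')
  qed (use F G in simp)
qed

lemma mpoly_deg_le_prod:
  assumes "finite S" "\<And>i. i \<in> S \<Longrightarrow> mpoly_deg_le (d i) (p i)"
  shows "mpoly_deg_le (\<Sum>i\<in>S. d i) (\<lambda>x. \<Prod>i\<in>S. p i x)"
  using assms by (induction S rule: finite_induct) (simp_all add: mpoly_deg_le_const mpoly_deg_le_mult)

lemma mpoly_deg_le_power:
  assumes "mpoly_deg_le d p"
  shows "mpoly_deg_le (m * d) (\<lambda>x. p x ^ m)"
  using mpoly_deg_le_prod[of "{..<m}" "\<lambda>_. d" "\<lambda>_. p"] assms by simp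

lemma mpoly_deg_le_sum:
  assumes "finite S" "\<And>i. i \<in> S \<Longrightarrow> mpoly_deg_le d (p i)"
  shows "mpoly_deg_le d (\<lambda>x. \<Sum>i\<in>S. p i x)"
  using assms by (induction S rule: finite_induct) (simp_all add: mpoly_deg_le_const mpoly_deg_le_add)

lemma mpoly_deg_le_compose_affine:
  assumes "mpoly_deg_le d p"
  shows "mpoly_deg_le d (\<lambda>x. p (a *\<^sub>R x + q))"
proof -
  obtain F c where F: "finite F" "\<And>\<beta>. \<beta> \<in> F \<Longrightarrow> total_degree \<beta> \<le> d"
    "\<And>x. p x = (\<Sum>\<beta>\<in>F. c \<beta> * monomial \<beta> x)"
    using assms by (elim mpoly_deg_leE) blast
  have monomial_affine: "mpoly_deg_le (total_degree \<beta>) (\<lambda>x. monomial \<beta> (a *\<^sub>R x + q))" for \<beta>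
  proof -
    have "mpoly_deg_le 1 (\<lambda>x. a * (x \<bullet> b) + q \<bullet> b)" if "b \<in> Basis" for b
      by (intro mpoly_deg_le_add mpoly_deg_le_cmult mpoly_deg_le_inner_Basis mpoly_deg_le_const that) simp
    then have "mpoly_deg_le (\<Sum>b\<in>Basis. \<beta> b * 1) (\<lambda>x. \<Prod>b\<in>Basis. (a * (x \<bullet> b) + q \<bullet> b) ^ \<beta> b)"
      by (intro mpoly_deg_le_prod mpoly_deg_le_power) auto
    then show ?thesis
      by (simp add: monomial_def total_degree_def inner_add_left)
  qed
  have "mpoly_deg_le d (\<lambda>x. \<Sum>\<beta>\<in>F. c \<beta> * monomial \<beta> (a *\<^sub>R x + q))"
    by (intro mpoly_deg_le_sum mpoly_deg_le_cmult F(1))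
       (use monomial_affine F(2) mpoly_deg_le_mono in blast)
  then show ?thesis using F(3) by simp
qed

lemma norm_diff_square_expansion:
  "\<exists>(J::('a::euclidean_space \<times> nat) set) A B da db. finite J \<and>
     (\<forall>j\<in>J. mpoly_deg_le (da j) (A j) \<and> mpoly_deg_le (db j) (B j) \<and> da j + db j = 2) \<and>
     (\<forall>u v::'a. norm (u - v) ^ 2 = (\<Sum>j\<in>J. A j u * B j v))"
proof -
  define J where "J = (Basis::'a set) \<times> {0, 1, 2::nat}"
  define A :: "'a \<times> nat \<Rightarrow> 'a \<Rightarrow> real"
    where "A = (\<lambda>(b, j) u. if j = 0 then (u \<bullet> b) ^ 2 else if j = 1 then -2 * (u \<bullet> b) else 1)"
  define B :: "'a \<times> nat \<Rightarrow> 'a \<Rightarrow> real"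
    where "B = (\<lambda>(b, j) v. if j = 0 then 1 else if j = 1 then v \<bullet> b else (v \<bullet> b) ^ 2)"
  define da :: "'a \<times> nat \<Rightarrow> nat" where "da = (\<lambda>(b, j). 2 - j)"
  define db :: "'a \<times> nat \<Rightarrow> nat" where "db = snd"
  have "mpoly_deg_le (da j) (A j) \<and> mpoly_deg_le (db j) (B j) \<and> da j + db j = 2" if jJ: "j \<in> J" for j
  proof -
    obtain b i where j: "j = (b, i)" "b \<in> Basis" "i = 0 \<or> i = 1 \<or> i = 2"
      using jJ unfolding J_def by blast
    have lin: "mpoly_deg_le 1 (\<lambda>x::'a. x \<bullet> b)" using j by (intro mpoly_deg_le_inner_Basis) auto
    have quad: "mpoly_deg_le 2 (\<lambda>x::'a. (x \<bullet> b) ^ 2)" using mpoly_deg_le_power[OF lin, of 2] by simp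
    from j(3) show ?thesis
      using quad lin mpoly_deg_le_cmult[OF lin, of "-2"]
      by (elim disjE) (simp_all add: j(1) A_def B_def da_def db_def mpoly_deg_le_const)
  qed
  moreover have "norm (u - v) ^ 2 = (\<Sum>j\<in>J. A j u * B j v)" for u v :: 'a
  proof -
    have "norm (u - v) ^ 2 = (\<Sum>b\<in>Basis. ((u - v) \<bullet> b) ^ 2)"
      unfolding power2_norm_eq_inner by (subst euclidean_inner) (simp add: power2_eq_square)
    also have "\<dots> = (\<Sum>b\<in>Basis. \<Sum>i\<in>{0, 1, 2::nat}. A (b, i) u * B (b, i) v)"
      by (intro sum.cong refl) (simp add: A_def B_def inner_diff_left power2_eq_square algebra_simps)
    also have "\<dots> = (\<Sum>(b, i)\<in>Basis \<times> {0, 1, 2::nat}. A (b, i) u * B (b, i) v)"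
      by (rule sum.cartesian_product)
    finally show ?thesis
      unfolding J_def by (simp add: split_def)
  qed
  moreover have "finite J" unfolding J_def by simp
  ultimately show ?thesis by blast
qed

lemma norm_diff_power_expansion:
  "\<exists>(T::(nat \<Rightarrow> 'a::euclidean_space \<times> nat) set) A B da db. finite T \<and>
     (\<forall>t\<in>T. mpoly_deg_le (da t) (A t) \<and> mpoly_deg_le (db t) (B t) \<and> da t + db t = 2 * l) \<and>
     (\<forall>u v::'a. norm (u - v) ^ (2 * l) = (\<Sum>t\<in>T. A t u * B t v))"
proof -
  obtain J :: "('a \<times> nat) set" and A B da db where J: "finite J"
    "\<And>j. j \<in> J \<Longrightarrow> mpoly_deg_le (da j) (A j) \<and> mpoly_deg_le (db j) (B j) \<and> da j + db j = 2"
    "\<And>u v::'a. norm (u - v) ^ 2 = (\<Sum>j\<in>J. A j u * B j v)"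
    using norm_diff_square_expansion[where 'a='a] by blast
  define T where "T = PiE {..<l} (\<lambda>_. J)"
  define A' where "A' = (\<lambda>t u. \<Prod>i<l. A (t i) u)"
  define B' where "B' = (\<lambda>t v. \<Prod>i<l. B (t i) v)"
  define da' where "da' = (\<lambda>t. \<Sum>i<l. da (t i))"
  define db' where "db' = (\<lambda>t. \<Sum>i<l. db (t i))"
  have "finite T" unfolding T_def using J(1) by (simp add: finite_PiE)
  moreover have "\<forall>t\<in>T. mpoly_deg_le (da' t) (A' t) \<and> mpoly_deg_le (db' t) (B' t) \<and> da' t + db' t = 2 * l"
  proof
    fix t assume "t \<in> T"
    then have tJ: "\<And>i. i < l \<Longrightarrow> t i \<in> J" unfolding T_def by auto
    have "da' t + db' t = (\<Sum>i<l. 2::nat)"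
      unfolding da'_def db'_def
      by (subst sum.distrib[symmetric]) (intro sum.cong refl, use tJ J(2) in auto)
    moreover have "mpoly_deg_le (da' t) (A' t)" "mpoly_deg_le (db' t) (B' t)"
      unfolding A'_def B'_def da'_def db'_def
      by (intro mpoly_deg_le_prod finite_lessThan; use tJ J(2) in blast)+
    ultimately show "mpoly_deg_le (da' t) (A' t) \<and> mpoly_deg_le (db' t) (B' t) \<and> da' t + db' t = 2 * l"
      by simp
  qed
  moreover have "\<forall>u v. norm (u - v) ^ (2 * l) = (\<Sum>t\<in>T. A' t u * B' t v)"
  proof (intro allI)
    fix u v :: 'a
    have "norm (u - v) ^ (2 * l) = (\<Prod>i<l. \<Sum>j\<in>J. A j u * B j v)"
      by (simp add: power_mult J(3))
    also have "\<dots> = (\<Sum>t\<in>T. \<Prod>i<l. A (t i) u * B (t i) v)"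
      unfolding T_def using J(1) by (subst prod_sum_PiE) auto
    finally show "norm (u - v) ^ (2 * l) = (\<Sum>t\<in>T. A' t u * B' t v)"
      by (simp add: A'_def B'_def prod.distrib)
  qed
  ultimately show ?thesis by blast
qed

lemma borel_measurable_monomial [measurable]:
  "monomial \<beta> \<in> borel_measurable (borel :: 'a::euclidean_space measure)"
  unfolding monomial_def by measurable

lemma abs_monomial_le: "\<bar>monomial \<beta> (u::'a::euclidean_space)\<bar> \<le> norm u ^ total_degree \<beta>"
proof -
  have "\<bar>monomial \<beta> u\<bar> = (\<Prod>b\<in>Basis. \<bar>u \<bullet> b\<bar> ^ \<beta> b)"
    unfolding monomial_def by (simp add: abs_prod power_abs)
  also have "\<dots> \<le> (\<Prod>b\<in>(Basis::'a set). norm u ^ \<beta> b)"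
    by (intro prod_mono conjI power_mono) (auto simp: Basis_le_norm)
  also have "\<dots> = norm u ^ total_degree \<beta>"
    by (simp add: total_degree_def power_sum)
  finally show ?thesis .
qed

lemma power_le_one_plus_powr:
  assumes "real m \<le> \<alpha>" "0 \<le> r"
  shows "r ^ m \<le> 1 + r powr \<alpha>"
proof (cases "r \<le> 1")
  case True
  then have "r ^ m \<le> 1" using assms by (simp add: power_le_one)
  then show ?thesis by (smt (verit) powr_ge_zero)
next
  case False
  then have "r ^ m = r powr m" using assms by (simp add: powr_realpow)
  also have "\<dots> \<le> r powr \<alpha>" using False assms by (intro powr_mono) auto
  finally show ?thesis by simp
qed

lemma integrable_monomial_comp:
  assumes "prob_space M" "f \<in> borel_measurable M"
    "integrable M (\<lambda>x. norm (f x) powr \<alpha>)" "real (total_degree \<beta>) \<le> \<alpha>"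
  shows "integrable M (\<lambda>x. monomial \<beta> (f x))"
proof (rule Bochner_Integration.integrable_bound)
  interpret prob_space M by fact
  show "integrable M (\<lambda>x. 1 + norm (f x) powr \<alpha>)"
    using assms(3) by simp
  show "(\<lambda>x. monomial \<beta> (f x)) \<in> borel_measurable M"
    using assms(2) by measurable
  have "\<bar>monomial \<beta> (f x)\<bar> \<le> 1 + norm (f x) powr \<alpha>" for x
    using abs_monomial_le[of \<beta> "f x"] power_le_one_plus_powr[OF assms(4) norm_ge_zero[of "f x"]] by linarith
  then show "AE x in M. norm (monomial \<beta> (f x)) \<le> norm (1 + norm (f x) powr \<alpha>)"
    by (intro AE_I2) simp
qed

lemma integrable_mpoly_comp:
  assumes "prob_space M" "f \<in> borel_measurable M"
    "integrable M (\<lambda>x. norm (f x) powr \<alpha>)" "real d \<le> \<alpha>" "mpoly_deg_le d p"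
  shows "integrable M (\<lambda>x. p (f x))"
proof -
  obtain F c where F: "finite F" "\<And>\<beta>. \<beta> \<in> F \<Longrightarrow> total_degree \<beta> \<le> d"
    "\<And>x. p x = (\<Sum>\<beta>\<in>F. c \<beta> * monomial \<beta> x)"
    using assms(5) by (elim mpoly_deg_leE) blast
  have deg: "real (total_degree \<beta>) \<le> \<alpha>" if "\<beta> \<in> F" for \<beta>
    using F(2)[OF that] assms(4) by (meson of_nat_le_iff order.trans)
  have "integrable M (\<lambda>x. \<Sum>\<beta>\<in>F. c \<beta> * monomial \<beta> (f x))"
    by (intro Bochner_Integration.integrable_sum integrable_mult_right
        integrable_monomial_comp[OF assms(1-3) deg])
  then show ?thesis using F(3) by simp
qed

lemma equal_moments_upto_integral_mpoly:
  assumes "equal_moments_upto l \<mu> \<nu>" "d \<le> l" "mpoly_deg_le d p"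
  shows "(\<integral>x. p x \<partial>\<mu>) = (\<integral>x. p x \<partial>\<nu>)"
proof -
  obtain F c where F: "finite F" "\<And>\<beta>. \<beta> \<in> F \<Longrightarrow> total_degree \<beta> \<le> d"
    "\<And>x. p x = (\<Sum>\<beta>\<in>F. c \<beta> * monomial \<beta> x)"
    using assms(3) by (elim mpoly_deg_leE) blast
  have m: "integrable \<mu> (monomial \<beta>) \<and> integrable \<nu> (monomial \<beta>) \<and>
        (\<integral>x. monomial \<beta> x \<partial>\<mu>) = (\<integral>x. monomial \<beta> x \<partial>\<nu>)" if "\<beta> \<in> F" for \<beta>
    using assms(1,2) F(2)[OF that] unfolding equal_moments_upto_def total_degree_def by force
  have "(\<integral>x. p x \<partial>\<mu>) = (\<Sum>\<beta>\<in>F. c \<beta> * (\<integral>x. monomial \<beta> x \<partial>\<mu>))"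
    using m by (simp add: F(3) Bochner_Integration.integral_sum)
  also have "\<dots> = (\<Sum>\<beta>\<in>F. c \<beta> * (\<integral>x. monomial \<beta> x \<partial>\<nu>))"
    using m by simp
  also have "\<dots> = (\<integral>x. p x \<partial>\<nu>)"
    using m by (simp add: F(3) Bochner_Integration.integral_sum)
  finally show ?thesis .
qed

section \<open>Energy integrals of image laws\<close>

definition energy_int_map ::
    "real \<Rightarrow> 'b measure \<Rightarrow> ('b \<Rightarrow> 'a::euclidean_space) \<Rightarrow> 'c measure \<Rightarrow> ('c \<Rightarrow> 'a) \<Rightarrow> real" where
  "energy_int_map \<alpha> M f N g = (\<integral>p. norm (f (fst p) - g (snd p)) powr \<alpha> \<partial>(M \<Otimes>\<^sub>M N))"

lemma energy_int_map_id: "energy_int_map \<alpha> \<mu> (\<lambda>x. x) \<nu> (\<lambda>y. y) = energy_int \<alpha> \<mu> \<nu>"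
  unfolding energy_int_map_def energy_int_def energy_kernel_def ..

lemma powr_add_le:
  fixes a b \<alpha> :: real
  assumes "0 \<le> a" "0 \<le> b" "0 \<le> \<alpha>"
  shows "(a + b) powr \<alpha> \<le> 2 powr \<alpha> * (a powr \<alpha> + b powr \<alpha>)"
proof -
  have "(a + b) powr \<alpha> \<le> (2 * max a b) powr \<alpha>"
    using assms by (intro powr_mono2) auto
  also have "\<dots> = 2 powr \<alpha> * max a b powr \<alpha>"
    using assms by (simp add: powr_mult)
  also have "max a b powr \<alpha> \<le> a powr \<alpha> + b powr \<alpha>"
    by (cases "a \<le> b") (auto simp: max_def)
  then have "2 powr \<alpha> * max a b powr \<alpha> \<le> 2 powr \<alpha> * (a powr \<alpha> + b powr \<alpha>)"
    by (intro mult_left_mono) auto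
  finally show ?thesis .
qed

lemma norm_diff_powr_le:
  assumes "0 \<le> \<alpha>"
  shows "norm (u - v) powr \<alpha> \<le> 2 powr \<alpha> * (norm u powr \<alpha> + norm v powr \<alpha>)"
proof -
  have "norm (u - v) powr \<alpha> \<le> (norm u + norm v) powr \<alpha>"
    using assms by (intro powr_mono2) (auto simp: norm_triangle_ineq4)
  also have "\<dots> \<le> 2 powr \<alpha> * (norm u powr \<alpha> + norm v powr \<alpha>)"
    using assms by (intro powr_add_le) auto
  finally show ?thesis .
qed

lemma
  assumes "prob_space M" "prob_space N" "integrable M f" "integrable N (g :: _ \<Rightarrow> real)"
  shows integrable_pair_mult: "integrable (M \<Otimes>\<^sub>M N) (\<lambda>p. f (fst p) * g (snd p))"
    and integral_pair_mult:
      "(\<integral>p. f (fst p) * g (snd p) \<partial>(M \<Otimes>\<^sub>M N)) = (\<integral>x. f x \<partial>M) * (\<integral>y. g y \<partial>N)"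
proof -
  interpret M: prob_space M by fact
  interpret N: prob_space N by fact
  interpret pair_prob_space M N by unfold_locales
  have [measurable]: "f \<in> borel_measurable M" "g \<in> borel_measurable N" using assms(3,4) by auto
  show int: "integrable (M \<Otimes>\<^sub>M N) (\<lambda>p. f (fst p) * g (snd p))"
  proof (rule Fubini_integrable)
    have "integrable M (\<lambda>x. norm (f x) * (\<integral>y. norm (g y) \<partial>N))"
      using assms(3) by (intro integrable_mult_left) auto
    then show "integrable M (\<lambda>x. \<integral>y. norm (f (fst (x, y)) * g (snd (x, y))) \<partial>N)"
      by (simp add: abs_mult)
  qed (use assms(4) in auto)
  show "(\<integral>p. f (fst p) * g (snd p) \<partial>(M \<Otimes>\<^sub>M N)) = (\<integral>x. f x \<partial>M) * (\<integral>y. g y \<partial>N)"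
    using integral_fst'[OF int] by simp
qed

lemma integrable_energy_int_map:
  fixes f :: "'b \<Rightarrow> 'a::euclidean_space" and g :: "'c \<Rightarrow> 'a"
  assumes "prob_space M" "prob_space N" "f \<in> borel_measurable M" "g \<in> borel_measurable N"
    "integrable M (\<lambda>x. norm (f x) powr \<alpha>)" "integrable N (\<lambda>y. norm (g y) powr \<alpha>)" "0 \<le> \<alpha>"
  shows "integrable (M \<Otimes>\<^sub>M N) (\<lambda>p. norm (f (fst p) - g (snd p)) powr \<alpha>)"
proof (rule Bochner_Integration.integrable_bound)
  interpret M: prob_space M by fact
  interpret N: prob_space N by fact
  have "integrable (M \<Otimes>\<^sub>M N) (\<lambda>p. norm (f (fst p)) powr \<alpha> * 1)"
    "integrable (M \<Otimes>\<^sub>M N) (\<lambda>p. 1 * norm (g (snd p)) powr \<alpha>)"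
    by (intro integrable_pair_mult; use assms in simp)+
  then show "integrable (M \<Otimes>\<^sub>M N)
      (\<lambda>p. 2 powr \<alpha> * (norm (f (fst p)) powr \<alpha> + norm (g (snd p)) powr \<alpha>))"
    by simp
  show "(\<lambda>p. norm (f (fst p) - g (snd p)) powr \<alpha>) \<in> borel_measurable (M \<Otimes>\<^sub>M N)"
    using assms(3,4) by measurable
  show "AE p in M \<Otimes>\<^sub>M N. norm (norm (f (fst p) - g (snd p)) powr \<alpha>)
      \<le> norm (2 powr \<alpha> * (norm (f (fst p)) powr \<alpha> + norm (g (snd p)) powr \<alpha>))"
    using norm_diff_powr_le[OF assms(7)] by (intro AE_I2) auto
qed

lemma integrable_norm_diff_power:
  fixes f :: "'b \<Rightarrow> 'a::euclidean_space" and g :: "'c \<Rightarrow> 'a"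
  assumes "prob_space M" "prob_space N" "f \<in> borel_measurable M" "g \<in> borel_measurable N"
    "integrable M (\<lambda>x. norm (f x) powr \<alpha>)" "integrable N (\<lambda>y. norm (g y) powr \<alpha>)" "real m \<le> \<alpha>"
  shows "integrable (M \<Otimes>\<^sub>M N) (\<lambda>p. norm (f (fst p) - g (snd p)) ^ m)"
proof (rule Bochner_Integration.integrable_bound)
  interpret M: prob_space M by fact
  interpret N: prob_space N by fact
  interpret pair_prob_space M N by unfold_locales
  have "0 \<le> \<alpha>" using assms(7) of_nat_0_le_iff order_trans by blast
  then show "integrable (M \<Otimes>\<^sub>M N) (\<lambda>p. 1 + norm (f (fst p) - g (snd p)) powr \<alpha>)"
    using integrable_energy_int_map[OF assms(1-6)] by simp
  show "(\<lambda>p. norm (f (fst p) - g (snd p)) ^ m) \<in> borel_measurable (M \<Otimes>\<^sub>M N)"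
    using assms(3,4) by measurable
  show "AE p in M \<Otimes>\<^sub>M N. norm (norm (f (fst p) - g (snd p)) ^ m)
      \<le> norm (1 + norm (f (fst p) - g (snd p)) powr \<alpha>)"
    using power_le_one_plus_powr[OF assms(7)] by (intro AE_I2) auto
qed

lemma energy_int_map_commute:
  fixes f :: "'b \<Rightarrow> 'a::euclidean_space" and g :: "'c \<Rightarrow> 'a"
  assumes "prob_space M" "prob_space N" "f \<in> borel_measurable M" "g \<in> borel_measurable N"
  shows "energy_int_map \<alpha> M f N g = energy_int_map \<alpha> N g M f"
proof -
  interpret M: prob_space M by fact
  interpret N: prob_space N by fact
  interpret pair_prob_space N M by unfold_locales
  have "(\<lambda>p. norm (f (snd p) - g (fst p)) powr \<alpha>) \<in> borel_measurable (N \<Otimes>\<^sub>M M)"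
    using assms(3,4) by measurable
  from integral_product_swap[OF this] show ?thesis
    unfolding energy_int_map_def by (simp add: norm_minus_commute case_prod_beta')
qed

lemma energy_int_commute:
  assumes "prob_space \<mu>" "prob_space \<nu>" "sets \<mu> = sets borel" "sets \<nu> = sets borel"
  shows "energy_int \<alpha> \<mu> \<nu> = energy_int \<alpha> \<nu> (\<mu> :: 'a::euclidean_space measure)"
  using energy_int_map_commute[OF assms(1,2), of "\<lambda>x. x" "\<lambda>y. y" \<alpha>] assms(3,4)
  by (simp add: energy_int_map_id measurable_ident_sets)

lemma borel_measurable_energy_kernel [measurable]:
  "energy_kernel \<alpha> \<in> borel_measurable (borel \<Otimes>\<^sub>M (borel :: 'a::euclidean_space measure))"
  unfolding energy_kernel_def by measurable

lemma energy_int_distr: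
  assumes "prob_space M" "prob_space N" "f \<in> M \<rightarrow>\<^sub>M borel" "g \<in> N \<rightarrow>\<^sub>M borel"
  shows "energy_int \<alpha> (distr M borel f) (distr N borel g) = energy_int_map \<alpha> M f N g"
proof -
  interpret M: prob_space M by fact
  interpret N: prob_space N by fact
  have "sigma_finite_measure (distr N borel g)"
    using assms(4) N.prob_space_distr prob_space_imp_sigma_finite by blast
  then have "distr M borel f \<Otimes>\<^sub>M distr N borel g =
      distr (M \<Otimes>\<^sub>M N) (borel \<Otimes>\<^sub>M borel) (\<lambda>(x, y). (f x, g y))"
    by (rule pair_measure_distr[OF assms(3,4)])
  then have "energy_int \<alpha> (distr M borel f) (distr N borel g) =
      (\<integral>p. energy_kernel \<alpha> ((\<lambda>(x, y). (f x, g y)) p) \<partial>(M \<Otimes>\<^sub>M N))"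
    unfolding energy_int_def
    by (simp, intro integral_distr) (use assms(3,4) in measurable)
  then show ?thesis
    unfolding energy_int_map_def energy_kernel_def by (simp add: case_prod_beta')
qed

section \<open>Positive definiteness of the Gaussian kernel\<close>

lemma exp_partial_sum_le:
  fixes x :: real
  assumes "0 \<le> x"
  shows "(\<Sum>m<n. x ^ m / fact m) \<le> exp x"
proof -
  have s: "(\<lambda>m. x ^ m / fact m) sums exp x"
    using exp_converges[of x] by (simp add: divide_inverse mult.commute)
  then have "(\<Sum>m<n. x ^ m / fact m) \<le> (\<Sum>m. x ^ m / fact m)"
    using assms by (intro sum_le_suminf) (auto simp: sums_summable)
  also have "\<dots> = exp x" using s by (simp add: sums_unique[symmetric])
  finally show ?thesis .
qed

lemma power_div_fact_le_exp:
  fixes x :: real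
  assumes "0 \<le> x"
  shows "x ^ m / fact m \<le> exp x"
proof -
  have "x ^ m / fact m \<le> (\<Sum>j<Suc m. x ^ j / fact j)"
    using assms by (intro member_le_sum) auto
  also have "\<dots> \<le> exp x" by (rule exp_partial_sum_le[OF assms])
  finally show ?thesis .
qed

definition gauss_feature :: "real \<Rightarrow> (nat \<Rightarrow> 'a::euclidean_space) \<Rightarrow> nat \<Rightarrow> 'a \<Rightarrow> real" where
  "gauss_feature s t m u = exp (- s * norm u ^ 2) * (\<Prod>i<m. u \<bullet> t i)"

lemma borel_measurable_gauss_feature [measurable]: "gauss_feature s t m \<in> borel_measurable borel"
  unfolding gauss_feature_def by measurable

lemma abs_gauss_feature_le:
  assumes "0 < s" "\<And>i. i < m \<Longrightarrow> t i \<in> Basis"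
  shows "\<bar>gauss_feature s t m u\<bar> \<le> 1 + fact m / s ^ m"
proof -
  define r where "r = norm u"
  have r0: "0 \<le> r" unfolding r_def by simp
  have "\<bar>\<Prod>i<m. u \<bullet> t i\<bar> = (\<Prod>i<m. \<bar>u \<bullet> t i\<bar>)" by (simp add: abs_prod)
  also have "\<dots> \<le> (\<Prod>i<m. r)"
    by (intro prod_mono) (use assms(2) in \<open>auto simp: r_def Basis_le_norm\<close>)
  finally have prod_le: "\<bar>\<Prod>i<m. u \<bullet> t i\<bar> \<le> r ^ m" by simp
  have "(s * r ^ 2) ^ m / fact m \<le> exp (s * r ^ 2)"
    using assms(1) by (intro power_div_fact_le_exp) auto
  then have "exp (- s * r ^ 2) * (s ^ m * (r ^ 2) ^ m) \<le> exp (- s * r ^ 2) * (fact m * exp (s * r ^ 2))"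
    by (intro mult_left_mono) (simp_all add: field_simps power_mult_distrib)
  also have "\<dots> = fact m" by (simp add: exp_minus_inverse mult.commute[of _ "exp _"] exp_minus)
  finally have gauss_le: "exp (- s * r ^ 2) * (r ^ 2) ^ m \<le> fact m / s ^ m"
    using assms(1) by (simp add: field_simps)
  have "r ^ m \<le> 1 + (r ^ 2) ^ m"
  proof (cases "r \<le> 1")
    case True
    then show ?thesis using r0 by (smt (verit) power_le_one zero_le_power)
  next
    case False
    then have "r ^ m \<le> r ^ (2 * m)" by (intro power_increasing) auto
    then show ?thesis by (simp add: power_mult)
  qed
  then have "\<bar>gauss_feature s t m u\<bar> \<le> exp (- s * r ^ 2) * (1 + (r ^ 2) ^ m)"
    unfolding gauss_feature_def r_def[symmetric] using prod_le
    by (simp add: abs_mult)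
  also have "\<dots> \<le> 1 + fact m / s ^ m"
    using gauss_le assms(1) r0 by (simp add: distrib_left add_mono)
  finally show ?thesis .
qed

lemma inner_power_expansion:
  fixes u v :: "'a::euclidean_space"
  shows "(u \<bullet> v) ^ m = (\<Sum>t\<in>PiE {..<m} (\<lambda>_. Basis). (\<Prod>i<m. u \<bullet> t i) * (\<Prod>i<m. v \<bullet> t i))"
proof -
  have "(u \<bullet> v) ^ m = (\<Prod>i<m. \<Sum>b\<in>Basis. u \<bullet> b * (v \<bullet> b))"
    by (simp add: euclidean_inner[of u v])
  also have "\<dots> = (\<Sum>t\<in>PiE {..<m} (\<lambda>_. Basis). \<Prod>i<m. u \<bullet> t i * (v \<bullet> t i))"
    by (subst prod_sum_PiE) auto
  finally show ?thesis by (simp add: prod.distrib)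
qed

text \<open>The terms of the expansion of \<open>exp (- s |u - v|\<^sup>2) = exp (- s |u|\<^sup>2) exp (- s |v|\<^sup>2) exp (2 s u \<bullet> v)\<close>
  in powers of \<open>u \<bullet> v\<close>.\<close>
definition gauss_term :: "real \<Rightarrow> nat \<Rightarrow> 'a::real_inner \<Rightarrow> 'a \<Rightarrow> real" where
  "gauss_term s m u v = (2 * s) ^ m / fact m *
     (exp (- s * norm u ^ 2) * exp (- s * norm v ^ 2) * (u \<bullet> v) ^ m)"

lemma gauss_term_sums: "(\<lambda>m. gauss_term s m u v) sums exp (- s * norm (u - v) ^ 2)"
proof -
  have "(\<lambda>m. exp (- s * norm u ^ 2) * exp (- s * norm v ^ 2) * ((2 * s * (u \<bullet> v)) ^ m / fact m))
      sums (exp (- s * norm u ^ 2) * exp (- s * norm v ^ 2) * exp (2 * s * (u \<bullet> v)))"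
    using exp_converges[of "2 * s * (u \<bullet> v)"] by (intro sums_mult) (simp add: field_simps)
  moreover have "norm (u - v) ^ 2 = norm u ^ 2 - 2 * (u \<bullet> v) + norm v ^ 2"
    by (simp add: power2_norm_eq_inner inner_diff_left inner_diff_right inner_commute)
  then have "exp (- s * norm u ^ 2) * exp (- s * norm v ^ 2) * exp (2 * s * (u \<bullet> v)) =
      exp (- s * norm (u - v) ^ 2)"
    unfolding exp_add[symmetric] by (simp only:) (simp add: algebra_simps)
  ultimately show ?thesis
    unfolding gauss_term_def by (simp add: power_mult_distrib field_simps)
qed

lemma sum_abs_gauss_term_le:
  assumes "0 \<le> s"
  shows "(\<Sum>m<n. \<bar>gauss_term s m u v\<bar>) \<le> 1"
proof -
  define x where "x = 2 * s * \<bar>u \<bullet> v\<bar>"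
  have "(\<Sum>m<n. \<bar>gauss_term s m u v\<bar>) =
      exp (- s * norm u ^ 2) * exp (- s * norm v ^ 2) * (\<Sum>m<n. x ^ m / fact m)"
    unfolding gauss_term_def x_def sum_distrib_left
    by (intro sum.cong refl) (use assms in \<open>simp add: abs_mult power_abs power_mult_distrib field_simps\<close>)
  also have "\<dots> \<le> exp (- s * norm u ^ 2) * exp (- s * norm v ^ 2) * exp x"
    using assms unfolding x_def by (intro mult_left_mono exp_partial_sum_le) auto
  also have "\<dots> = exp (- s * (norm u ^ 2 + norm v ^ 2 - 2 * \<bar>u \<bullet> v\<bar>))"
    unfolding x_def by (simp add: exp_add[symmetric] algebra_simps)
  also have "\<dots> \<le> 1"
  proof -
    have "2 * \<bar>u \<bullet> v\<bar> \<le> 2 * (norm u * norm v)"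
      using Cauchy_Schwarz_ineq2[of u v] by simp
    also have "\<dots> \<le> norm u ^ 2 + norm v ^ 2"
      using sum_squares_bound[of "norm u" "norm v"] by (simp add: mult.assoc)
    finally show ?thesis using assms by (simp add: mult_nonneg_nonneg)
  qed
  finally show ?thesis .
qed

lemma gauss_term_eq_sum_features:
  fixes u v :: "'a::euclidean_space"
  shows "gauss_term s m u v = (2 * s) ^ m / fact m *
    (\<Sum>t\<in>PiE {..<m} (\<lambda>_. Basis). gauss_feature s t m u * gauss_feature s t m v)"
  unfolding gauss_term_def gauss_feature_def inner_power_expansion sum_distrib_left
  by (intro arg_cong[where f="\<lambda>x. _ * x"] sum.cong refl) (simp add: algebra_simps)

lemma integral_gauss_term:
  fixes f :: "'b \<Rightarrow> 'a::euclidean_space" and g :: "'c \<Rightarrow> 'a"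
  assumes "prob_space M" "prob_space N" "f \<in> borel_measurable M" "g \<in> borel_measurable N" "0 < s"
  shows "integrable (M \<Otimes>\<^sub>M N) (\<lambda>p. gauss_term s m (f (fst p)) (g (snd p)))"
    and "(\<integral>p. gauss_term s m (f (fst p)) (g (snd p)) \<partial>(M \<Otimes>\<^sub>M N)) =
      (2 * s) ^ m / fact m * (\<Sum>t\<in>PiE {..<m} (\<lambda>_. Basis).
        (\<integral>x. gauss_feature s t m (f x) \<partial>M) * (\<integral>y. gauss_feature s t m (g y) \<partial>N))"
proof -
  interpret M: prob_space M by fact
  interpret N: prob_space N by fact
  note [measurable] = assms(3,4)
  have int: "integrable M (\<lambda>x. gauss_feature s t m (f x))" "integrable N (\<lambda>y. gauss_feature s t m (g y))"
    if "t \<in> PiE {..<m} (\<lambda>_. Basis)" for t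
    using abs_gauss_feature_le[OF assms(5), of m t] that
    by (auto simp: PiE_iff intro!: AE_I2 M.integrable_const_bound[where B="1 + fact m / s ^ m"]
        N.integrable_const_bound[where B="1 + fact m / s ^ m"])
  note pair = integrable_pair_mult[OF assms(1,2) int] integral_pair_mult[OF assms(1,2) int]
  show "integrable (M \<Otimes>\<^sub>M N) (\<lambda>p. gauss_term s m (f (fst p)) (g (snd p)))"
    unfolding gauss_term_eq_sum_features using pair(1) by auto
  show "(\<integral>p. gauss_term s m (f (fst p)) (g (snd p)) \<partial>(M \<Otimes>\<^sub>M N)) =
      (2 * s) ^ m / fact m * (\<Sum>t\<in>PiE {..<m} (\<lambda>_. Basis).
        (\<integral>x. gauss_feature s t m (f x) \<partial>M) * (\<integral>y. gauss_feature s t m (g y) \<partial>N))"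
    unfolding gauss_term_eq_sum_features using pair by (simp add: Bochner_Integration.integral_sum)
qed

lemma integral_gauss_kernel_sums:
  fixes f :: "'b \<Rightarrow> 'a::euclidean_space" and g :: "'c \<Rightarrow> 'a"
  assumes "prob_space M" "prob_space N" "f \<in> borel_measurable M" "g \<in> borel_measurable N" "0 < s"
  shows "(\<lambda>m. (2 * s) ^ m / fact m * (\<Sum>t\<in>PiE {..<m} (\<lambda>_. Basis).
            (\<integral>x. gauss_feature s t m (f x) \<partial>M) * (\<integral>y. gauss_feature s t m (g y) \<partial>N)))
         sums (\<integral>p. exp (- s * norm (f (fst p) - g (snd p)) ^ 2) \<partial>(M \<Otimes>\<^sub>M N))"
proof -
  interpret M: prob_space M by fact
  interpret N: prob_space N by fact
  interpret P: pair_prob_space M N by unfold_locales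
  note [measurable] = assms(3,4)
  define H where "H = (\<lambda>m p. gauss_term s m (f (fst p)) (g (snd p)))"
  have [measurable]: "H m \<in> borel_measurable (M \<Otimes>\<^sub>M N)" for m
    unfolding H_def gauss_term_def by measurable
  have partial_le: "norm (\<Sum>m<n. H m p) \<le> 1" for n p
  proof -
    have "\<bar>\<Sum>m<n. H m p\<bar> \<le> (\<Sum>m<n. \<bar>H m p\<bar>)" by (rule sum_abs)
    also have "\<dots> \<le> 1" unfolding H_def using assms(5) by (intro sum_abs_gauss_term_le) simp
    finally show ?thesis by simp
  qed
  have "(\<lambda>n. integral\<^sup>L (M \<Otimes>\<^sub>M N) (\<lambda>p. \<Sum>m<n. H m p)) \<longlonglongrightarrow>
      (\<integral>p. exp (- s * norm (f (fst p) - g (snd p)) ^ 2) \<partial>(M \<Otimes>\<^sub>M N))"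
  proof (rule integral_dominated_convergence[where w="\<lambda>_. 1"])
    show "AE p in M \<Otimes>\<^sub>M N. (\<lambda>n. \<Sum>m<n. H m p) \<longlonglongrightarrow> exp (- s * norm (f (fst p) - g (snd p)) ^ 2)"
      unfolding H_def by (intro AE_I2) (use gauss_term_sums in \<open>simp add: sums_def\<close>)
  qed (use partial_le in simp_all)
  moreover have "integral\<^sup>L (M \<Otimes>\<^sub>M N) (\<lambda>p. \<Sum>m<n. H m p) = (\<Sum>m<n. integral\<^sup>L (M \<Otimes>\<^sub>M N) (H m))" for n
    using integral_gauss_term(1)[OF assms] unfolding H_def
    by (simp add: Bochner_Integration.integral_sum)
  ultimately show ?thesis
    using integral_gauss_term(2)[OF assms] unfolding H_def sums_def by simp
qed

lemma gauss_kernel_pos_def: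
  fixes f :: "'i \<Rightarrow> 'b \<Rightarrow> 'a::euclidean_space"
  assumes "finite S" "\<And>i. i \<in> S \<Longrightarrow> prob_space (M i)"
    "\<And>i. i \<in> S \<Longrightarrow> f i \<in> borel_measurable (M i)" "0 < s"
  shows "0 \<le> (\<Sum>i\<in>S. \<Sum>j\<in>S. c i * c j *
            (\<integral>p. exp (- s * norm (f i (fst p) - f j (snd p)) ^ 2) \<partial>(M i \<Otimes>\<^sub>M M j)))"
proof -
  define T where "T = (\<lambda>m::nat. PiE {..<m} (\<lambda>_. (Basis::'a set)))"
  define F where "F = (\<lambda>i m t. \<integral>x. gauss_feature s t m (f i x) \<partial>M i)"
  define a where "a = (\<lambda>m. (2 * s) ^ m / fact m * (\<Sum>t\<in>T m. (\<Sum>i\<in>S. c i * F i m t)\<^sup>2))"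
  have "(\<lambda>m. \<Sum>i\<in>S. \<Sum>j\<in>S. c i * c j * ((2 * s) ^ m / fact m * (\<Sum>t\<in>T m. F i m t * F j m t)))
      sums (\<Sum>i\<in>S. \<Sum>j\<in>S. c i * c j *
            (\<integral>p. exp (- s * norm (f i (fst p) - f j (snd p)) ^ 2) \<partial>(M i \<Otimes>\<^sub>M M j)))"
    unfolding F_def T_def
    by (intro sums_sum sums_mult integral_gauss_kernel_sums) (use assms in auto)
  moreover have "(\<Sum>i\<in>S. \<Sum>j\<in>S. c i * c j * ((2 * s) ^ m / fact m * (\<Sum>t\<in>T m. F i m t * F j m t)))
      = a m" for m
  proof -
    have "(\<Sum>i\<in>S. \<Sum>j\<in>S. c i * c j * ((2 * s) ^ m / fact m * (\<Sum>t\<in>T m. F i m t * F j m t))) =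
        (2 * s) ^ m / fact m * (\<Sum>i\<in>S. \<Sum>j\<in>S. \<Sum>t\<in>T m. (c i * F i m t) * (c j * F j m t))"
      by (simp add: sum_distrib_left mult_ac)
    also have "(\<Sum>i\<in>S. \<Sum>j\<in>S. \<Sum>t\<in>T m. (c i * F i m t) * (c j * F j m t)) =
        (\<Sum>i\<in>S. \<Sum>t\<in>T m. \<Sum>j\<in>S. (c i * F i m t) * (c j * F j m t))"
      by (intro sum.cong refl sum.swap)
    also have "\<dots> = (\<Sum>t\<in>T m. \<Sum>i\<in>S. \<Sum>j\<in>S. (c i * F i m t) * (c j * F j m t))"
      by (rule sum.swap)
    also have "\<dots> = (\<Sum>t\<in>T m. (\<Sum>i\<in>S. c i * F i m t)\<^sup>2)"
      by (simp add: power2_eq_square sum_product)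
    finally show ?thesis unfolding a_def .
  qed
  moreover have "0 \<le> a m" for m
    unfolding a_def using assms(4) by (intro mult_nonneg_nonneg divide_nonneg_pos sum_nonneg) auto
  ultimately show ?thesis
    using sums_le[OF _ sums_zero, of a] by simp
qed

section \<open>An integral representation of \<open>r powr \<alpha>\<close>\<close>

definition exp_remainder :: "nat \<Rightarrow> real \<Rightarrow> real" where
  "exp_remainder k u = (-1) ^ (k + 1) * (exp (- u) - (\<Sum>j<k+1. (- u) ^ j / fact j))"

lemma borel_measurable_exp_remainder [measurable]: "exp_remainder k \<in> borel_measurable borel"
  unfolding exp_remainder_def by measurable

lemma divide_fact_le: "0 \<le> (a::real) \<Longrightarrow> a / fact j \<le> a"
  using divide_left_mono[of 1 "fact j" a] by (simp add: fact_ge_1)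

lemma exp_remainder_Lagrange:
  assumes "0 \<le> u"
  shows "\<exists>t. \<bar>t\<bar> \<le> u \<and> exp_remainder k u = exp t / fact (k + 1) * u ^ (k + 1)"
proof -
  obtain t where t: "\<bar>t\<bar> \<le> \<bar>- u\<bar>"
    "exp (- u) = (\<Sum>m<k+1. (- u) ^ m / fact m) + exp t / fact (k + 1) * (- u) ^ (k + 1)"
    using Maclaurin_exp_le[of "- u" "k + 1"] by blast
  have "exp_remainder k u = exp t / fact (k + 1) * (((-1) ^ (k + 1) * (-1) ^ (k + 1)) * u ^ (k + 1))"
    unfolding exp_remainder_def t(2) by (simp add: power_minus[of u] mult_ac)
  also have "(-1::real) ^ (k + 1) * (-1) ^ (k + 1) = 1"
    by (simp add: power_mult_distrib[symmetric])
  finally show ?thesis using t(1) assms by auto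
qed

lemma exp_remainder_nonneg: "0 \<le> u \<Longrightarrow> 0 \<le> exp_remainder k u"
  using exp_remainder_Lagrange[of u k] by auto

lemma exp_remainder_pos: "0 < u \<Longrightarrow> 0 < exp_remainder k u"
  using exp_remainder_Lagrange[of u k] by auto

lemma exp_remainder_0 [simp]: "exp_remainder k 0 = 0"
proof -
  have "(\<Sum>j<k+1. (- (0::real)) ^ j / fact j) = (\<Sum>j<k+1. if j = 0 then 1 else 0)"
    by (intro sum.cong refl) (simp add: power_0_left)
  then show ?thesis unfolding exp_remainder_def by simp
qed

lemma exp_remainder_le_power:
  assumes "0 \<le> u" "u \<le> 1"
  shows "exp_remainder k u \<le> 3 * u ^ (k + 1)"
proof -
  obtain t where t: "\<bar>t\<bar> \<le> u" "exp_remainder k u = exp t / fact (k + 1) * u ^ (k + 1)"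
    using exp_remainder_Lagrange[OF assms(1)] by blast
  have "exp t / fact (k + 1) \<le> exp t" by (rule divide_fact_le) simp
  also have "\<dots> \<le> exp 1" using t(1) assms(2) by simp
  also have "\<dots> \<le> 3" using exp_le by simp
  finally show ?thesis unfolding t(2) using assms(1) by (intro mult_right_mono) auto
qed

lemma exp_remainder_le:
  assumes "0 \<le> u"
  shows "exp_remainder k u \<le> (real k + 2) * (1 + u ^ k)"
proof -
  have term_le: "u ^ j / fact j \<le> 1 + u ^ k" if "j < k + 1" for j
  proof -
    have "u ^ j / fact j \<le> u ^ j" using assms by (simp add: divide_fact_le)
    also have "u ^ j \<le> 1 + u ^ k"
    proof (cases "u \<le> 1")
      case True then show ?thesis using assms by (smt (verit) power_le_one zero_le_power)
    next
      case False
      then have "u ^ j \<le> u ^ k" using that by (intro power_increasing) auto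
      then show ?thesis by simp
    qed
    finally show ?thesis .
  qed
  have "exp_remainder k u \<le> \<bar>exp_remainder k u\<bar>" by simp
  also have "\<dots> = \<bar>exp (- u) - (\<Sum>j<k+1. (- u) ^ j / fact j)\<bar>"
    unfolding exp_remainder_def by (simp add: abs_mult power_abs)
  also have "\<dots> \<le> \<bar>exp (- u)\<bar> + \<bar>\<Sum>j<k+1. (- u) ^ j / fact j\<bar>"
    by (rule abs_triangle_ineq4)
  also have "\<dots> \<le> exp (- u) + (\<Sum>j<k+1. \<bar>(- u) ^ j / fact j\<bar>)"
    using sum_abs[of "\<lambda>j. (- u) ^ j / fact j" "{..<k+1}"] by simp
  also have "(\<Sum>j<k+1. \<bar>(- u) ^ j / fact j\<bar>) = (\<Sum>j<k+1. u ^ j / fact j)"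
    using assms by (intro sum.cong refl) (simp add: power_abs)
  also have "\<dots> \<le> (\<Sum>j<k+1. 1 + u ^ k)" by (intro sum_mono term_le) auto
  also have "exp (- u) \<le> 1" using assms by simp
  finally show ?thesis using zero_le_power[OF assms, of k] by (simp add: algebra_simps)
qed

definition remainder_kernel :: "nat \<Rightarrow> real \<Rightarrow> real \<Rightarrow> real" where
  "remainder_kernel k \<beta> u = indicator {0<..} u * exp_remainder k u * u powr (- 1 - \<beta>)"

lemma borel_measurable_remainder_kernel [measurable]:
  "remainder_kernel k \<beta> \<in> borel_measurable borel"
  unfolding remainder_kernel_def by measurable

definition remainder_const :: "nat \<Rightarrow> real \<Rightarrow> ennreal" where
  "remainder_const k \<beta> = (\<integral>\<^sup>+u. ennreal (remainder_kernel k \<beta> u) \<partial>lborel)"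

lemma remainder_kernel_le:
  "remainder_kernel k \<beta> u \<le> indicator {0..1} u * (3 * u powr (real k - \<beta>)) +
     indicator {1..} u * (2 * (real k + 2) * u powr (real k - 1 - \<beta>))"
  (is "_ \<le> ?h1 + ?h2")
proof -
  have h_nonneg: "0 \<le> ?h1" "0 \<le> ?h2" by (auto simp: indicator_def)
  consider "u \<le> 0" | "0 < u" "u \<le> 1" | "1 < u" by linarith
  then show ?thesis
  proof cases
    case 1
    then show ?thesis using h_nonneg unfolding remainder_kernel_def by simp
  next
    case 2
    have "remainder_kernel k \<beta> u \<le> 3 * u ^ (k + 1) * u powr (- 1 - \<beta>)"
      unfolding remainder_kernel_def using 2 exp_remainder_le_power[of u k]
      by (simp add: mult_right_mono)
    also have "\<dots> = 3 * (u powr (real k + 1) * u powr (- 1 - \<beta>))"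
      using 2 powr_realpow[of u "k + 1"] by (simp add: add.commute)
    also have "\<dots> = 3 * u powr (real k - \<beta>)"
      by (simp add: powr_add[symmetric])
    moreover have "?h1 = 3 * u powr (real k - \<beta>)" using 2 by simp
    ultimately show ?thesis using h_nonneg(2) by linarith
  next
    case 3
    have "remainder_kernel k \<beta> u \<le> (real k + 2) * (1 + u ^ k) * u powr (- 1 - \<beta>)"
      unfolding remainder_kernel_def using 3 exp_remainder_le[of u k]
      by (simp add: mult_right_mono)
    also have "\<dots> \<le> (real k + 2) * (2 * u ^ k) * u powr (- 1 - \<beta>)"
      using 3 by (intro mult_right_mono mult_left_mono) (auto simp: one_le_power)
    also have "\<dots> = 2 * (real k + 2) * (u powr (real k) * u powr (- 1 - \<beta>))"
      using 3 powr_realpow[of u k] by simp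
    also have "\<dots> = 2 * (real k + 2) * u powr (real k - 1 - \<beta>)"
      by (simp add: powr_add[symmetric]) (simp add: algebra_simps)
    moreover have "?h2 = 2 * (real k + 2) * u powr (real k - 1 - \<beta>)" using 3 by simp
    ultimately show ?thesis using h_nonneg(1) by linarith
  qed
qed

lemma remainder_const_finite:
  assumes "real k < \<beta>" "\<beta> < real k + 1"
  shows "remainder_const k \<beta> < \<infinity>"
proof -
  define h1 where "h1 = (\<lambda>u::real. indicator {0..1} u * (3 * u powr (real k - \<beta>)))"
  define h2 where "h2 = (\<lambda>u::real. indicator {1..} u * (2 * (real k + 2) * u powr (real k - 1 - \<beta>)))"
  have "((\<lambda>u. 3 * u powr (real k - \<beta>)) has_integral
      3 * (1 powr (real k - \<beta> + 1) / (real k - \<beta> + 1))) {0..1}"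
    by (intro has_integral_mult_right has_integral_powr_from_0) (use assms in auto)
  then have h1_finite: "(\<integral>\<^sup>+u. ennreal (h1 u) \<partial>lborel) < \<infinity>"
    unfolding h1_def by (subst nn_integral_has_integral_lebesgue) auto
  have "((\<lambda>u. 2 * (real k + 2) * u powr (real k - 1 - \<beta>)) has_integral
      2 * (real k + 2) * (- (1 powr (real k - 1 - \<beta> + 1)) / (real k - 1 - \<beta> + 1))) {1..}"
    by (intro has_integral_mult_right has_integral_powr_to_inf) (use assms in auto)
  then have h2_finite: "(\<integral>\<^sup>+u. ennreal (h2 u) \<partial>lborel) < \<infinity>"
    unfolding h2_def by (subst nn_integral_has_integral_lebesgue) auto
  have "remainder_const k \<beta> \<le> (\<integral>\<^sup>+u. ennreal (h1 u) + ennreal (h2 u) \<partial>lborel)"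
    unfolding remainder_const_def
  proof (rule nn_integral_mono)
    fix u
    have "0 \<le> h1 u" "0 \<le> h2 u" unfolding h1_def h2_def by (auto simp: indicator_def)
    then show "ennreal (remainder_kernel k \<beta> u) \<le> ennreal (h1 u) + ennreal (h2 u)"
      using remainder_kernel_le[of k \<beta> u] unfolding h1_def h2_def
      by (simp add: ennreal_plus[symmetric] del: ennreal_plus)
  qed
  also have "\<dots> = (\<integral>\<^sup>+u. ennreal (h1 u) \<partial>lborel) + (\<integral>\<^sup>+u. ennreal (h2 u) \<partial>lborel)"
    by (rule nn_integral_add) (auto simp: h1_def h2_def)
  also have "\<dots> < \<infinity>" using h1_finite h2_finite by simp
  finally show ?thesis .
qed

lemma remainder_const_pos: "0 < remainder_const k \<beta>"
proof (rule ccontr)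
  assume "\<not> 0 < remainder_const k \<beta>"
  then have "remainder_const k \<beta> = 0" by (simp add: not_gr_zero)
  then have "AE u in lborel. ennreal (remainder_kernel k \<beta> u) = 0"
    unfolding remainder_const_def by (subst (asm) nn_integral_0_iff_AE) auto
  moreover have "0 < remainder_kernel k \<beta> u" if "u \<in> {0<..<1}" for u
    using that exp_remainder_pos[of u k] unfolding remainder_kernel_def by auto
  ultimately have "AE u in lborel. u \<notin> {0<..<1::real}"
    by (auto elim!: eventually_mono simp: ennreal_eq_0_iff not_le[symmetric])
  then have "emeasure lborel {0<..<1::real} = 0"
    by (subst (asm) AE_iff_measurable[of "{0<..<1}"]) auto
  then show False by simp
qed

lemma nn_integral_exp_remainder_scaled:
  assumes "0 \<le> r"
  shows "(\<integral>\<^sup>+s. ennreal (indicator {0<..} s * exp_remainder k (s * r) * s powr (- 1 - \<beta>)) \<partial>lborel)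
      = ennreal (r powr \<beta>) * remainder_const k \<beta>"
proof (cases "r = 0")
  case False
  then have r0: "0 < r" using assms by simp
  define L where "L = (\<integral>\<^sup>+s. ennreal (indicator {0<..} s * exp_remainder k (s * r) * s powr (- 1 - \<beta>)) \<partial>lborel)"
  have kernel_scaled: "ennreal (remainder_kernel k \<beta> (0 + r * s)) =
      ennreal (r powr (- 1 - \<beta>)) * ennreal (indicator {0<..} s * exp_remainder k (s * r) * s powr (- 1 - \<beta>))"
    for s
  proof -
    have "remainder_kernel k \<beta> (0 + r * s) =
        r powr (- 1 - \<beta>) * (indicator {0<..} s * exp_remainder k (s * r) * s powr (- 1 - \<beta>))"
      unfolding remainder_kernel_def using r0
      by (cases "0 < s") (simp_all add: powr_mult mult_ac zero_less_mult_iff)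
    moreover have "0 \<le> indicator {0<..} s * exp_remainder k (s * r) * s powr (- 1 - \<beta>)"
      using r0 by (auto simp: indicator_def intro!: mult_nonneg_nonneg exp_remainder_nonneg)
    ultimately show ?thesis by (simp add: ennreal_mult)
  qed
  have "remainder_const k \<beta> = ennreal \<bar>r\<bar> * (\<integral>\<^sup>+s. ennreal (remainder_kernel k \<beta> (0 + r * s)) \<partial>lborel)"
    unfolding remainder_const_def by (rule nn_integral_real_affine) (use r0 in auto)
  also have "\<dots> = ennreal r * (ennreal (r powr (- 1 - \<beta>)) * L)"
    using r0
    unfolding kernel_scaled L_def by (subst nn_integral_cmult) simp_all
  also have "\<dots> = ennreal (r powr (- \<beta>)) * L"
    using r0 by (simp add: mult.assoc[symmetric] ennreal_mult[symmetric] powr_add[symmetric] powr_mult_base)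
  finally have "ennreal (r powr \<beta>) * remainder_const k \<beta> = ennreal (r powr \<beta> * r powr (- \<beta>)) * L"
    by (simp add: ennreal_mult mult.assoc)
  then show ?thesis using r0 by (simp add: powr_add[symmetric] L_def)
qed simp

lemma integrable_exp_remainder:
  fixes f :: "'b \<Rightarrow> 'a::euclidean_space" and g :: "'c \<Rightarrow> 'a"
  assumes "prob_space M" "prob_space N" "f \<in> borel_measurable M" "g \<in> borel_measurable N"
    "integrable M (\<lambda>x. norm (f x) powr \<alpha>)" "integrable N (\<lambda>y. norm (g y) powr \<alpha>)"
    "real (2 * k) \<le> \<alpha>" "0 \<le> s"
  shows "integrable (M \<Otimes>\<^sub>M N) (\<lambda>p. exp_remainder k (s * norm (f (fst p) - g (snd p)) ^ 2))"
proof (rule Bochner_Integration.integrable_bound)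
  interpret M: prob_space M by fact
  interpret N: prob_space N by fact
  interpret pair_prob_space M N by unfold_locales
  show "integrable (M \<Otimes>\<^sub>M N)
      (\<lambda>p. (real k + 2) * (1 + s ^ k * norm (f (fst p) - g (snd p)) ^ (2 * k)))"
    using integrable_norm_diff_power[OF assms(1-7)] by simp
  show "(\<lambda>p. exp_remainder k (s * norm (f (fst p) - g (snd p)) ^ 2)) \<in> borel_measurable (M \<Otimes>\<^sub>M N)"
    using assms(3,4) by measurable
  have "norm (exp_remainder k (s * r ^ 2)) \<le> norm ((real k + 2) * (1 + s ^ k * r ^ (2 * k)))" for r
    using exp_remainder_nonneg[of "s * r ^ 2" k] exp_remainder_le[of "s * r ^ 2" k] assms(8)
    by (simp add: power_mult_distrib power_mult)
  then show "AE p in M \<Otimes>\<^sub>M N. norm (exp_remainder k (s * norm (f (fst p) - g (snd p)) ^ 2))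
      \<le> norm ((real k + 2) * (1 + s ^ k * norm (f (fst p) - g (snd p)) ^ (2 * k)))"
    by simp
qed

lemma power2_powr_half:
  fixes x :: real
  assumes "0 \<le> x"
  shows "(x ^ 2) powr (\<alpha> / 2) = x powr \<alpha>"
proof (cases "x = 0")
  case False
  then have "x ^ 2 = x powr 2" using assms by (simp add: powr_realpow)
  then show ?thesis by (simp only: powr_powr) simp
qed simp

lemma nn_integral_exp_remainder_representation:
  assumes "0 \<le> r"
  shows "(\<integral>\<^sup>+s. ennreal (indicator {0<..} s * exp_remainder k (s * r ^ 2) * s powr (- 1 - \<alpha> / 2)) \<partial>lborel)
      = ennreal (r powr \<alpha>) * remainder_const k (\<alpha> / 2)"
  using nn_integral_exp_remainder_scaled[of "r ^ 2" k "\<alpha> / 2"] assms by (simp add: power2_powr_half)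

definition remainder_profile ::
    "nat \<Rightarrow> real \<Rightarrow> 'b measure \<Rightarrow> ('b \<Rightarrow> 'a::euclidean_space) \<Rightarrow> 'c measure \<Rightarrow> ('c \<Rightarrow> 'a) \<Rightarrow> real \<Rightarrow> real"
  where "remainder_profile k \<alpha> M f N g s = indicator {0<..} s * s powr (- 1 - \<alpha> / 2) *
    (\<integral>p. exp_remainder k (s * norm (f (fst p) - g (snd p)) ^ 2) \<partial>(M \<Otimes>\<^sub>M N))"

lemma remainder_profile_nonneg: "0 \<le> remainder_profile k \<alpha> M f N g s"
  unfolding remainder_profile_def
  by (auto simp: indicator_def intro!: mult_nonneg_nonneg integral_nonneg_AE exp_remainder_nonneg)

lemma ennreal_remainder_profile:
  fixes f :: "'b \<Rightarrow> 'a::euclidean_space" and g :: "'c \<Rightarrow> 'a"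
  assumes k: "real (2 * k) \<le> \<alpha>"
    and PM: "prob_space M" and PN: "prob_space N"
    and mf[measurable]: "f \<in> borel_measurable M" and mg[measurable]: "g \<in> borel_measurable N"
    and momf: "integrable M (\<lambda>x. norm (f x) powr \<alpha>)" and momg: "integrable N (\<lambda>y. norm (g y) powr \<alpha>)"
  shows "ennreal (remainder_profile k \<alpha> M f N g s) = (\<integral>\<^sup>+p. ennreal (indicator {0<..} s *
    exp_remainder k (s * norm (f (fst p) - g (snd p)) ^ 2) * s powr (- 1 - \<alpha> / 2)) \<partial>(M \<Otimes>\<^sub>M N))"
proof (cases "0 < s")
  case True
  interpret M: prob_space M by fact
  interpret N: prob_space N by fact
  interpret P: pair_prob_space M N by unfold_locales
  have "integrable (M \<Otimes>\<^sub>M N) (\<lambda>p. exp_remainder k (s * norm (f (fst p) - g (snd p)) ^ 2))"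
    using True k by (intro integrable_exp_remainder[OF PM PN mf mg momf momg]) auto
  then have "(\<integral>\<^sup>+p. ennreal (exp_remainder k (s * norm (f (fst p) - g (snd p)) ^ 2)) \<partial>(M \<Otimes>\<^sub>M N))
      = ennreal (\<integral>p. exp_remainder k (s * norm (f (fst p) - g (snd p)) ^ 2) \<partial>(M \<Otimes>\<^sub>M N))"
    using True by (intro nn_integral_eq_integral) (auto simp: exp_remainder_nonneg)
  moreover have "(\<integral>\<^sup>+p. ennreal (indicator {0<..} s * exp_remainder k (s * norm (f (fst p) - g (snd p)) ^ 2) *
        s powr (- 1 - \<alpha> / 2)) \<partial>(M \<Otimes>\<^sub>M N)) = ennreal (s powr (- 1 - \<alpha> / 2)) *
      (\<integral>\<^sup>+p. ennreal (exp_remainder k (s * norm (f (fst p) - g (snd p)) ^ 2)) \<partial>(M \<Otimes>\<^sub>M N))"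
    using True
    by (simp add: ennreal_mult[symmetric] exp_remainder_nonneg mult.commute nn_integral_cmult[symmetric])
  ultimately show ?thesis
    unfolding remainder_profile_def using True
    by (simp add: ennreal_mult[symmetric] integral_nonneg_AE exp_remainder_nonneg)
qed (simp add: remainder_profile_def)

lemma nn_integral_remainder_profile:
  fixes f :: "'b \<Rightarrow> 'a::euclidean_space" and g :: "'c \<Rightarrow> 'a"
  assumes k: "real (2 * k) \<le> \<alpha>" "0 < \<alpha>"
    and PM: "prob_space M" and PN: "prob_space N"
    and mf[measurable]: "f \<in> borel_measurable M" and mg[measurable]: "g \<in> borel_measurable N"
    and momf: "integrable M (\<lambda>x. norm (f x) powr \<alpha>)" and momg: "integrable N (\<lambda>y. norm (g y) powr \<alpha>)"
  shows "(\<integral>\<^sup>+s. ennreal (remainder_profile k \<alpha> M f N g s) \<partial>lborel) =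
    ennreal (energy_int_map \<alpha> M f N g) * remainder_const k (\<alpha> / 2)"
proof -
  interpret M: prob_space M by fact
  interpret N: prob_space N by fact
  interpret P: pair_prob_space M N by unfold_locales
  interpret Q: pair_sigma_finite "M \<Otimes>\<^sub>M N" lborel by unfold_locales
  define F where "F = (\<lambda>(p, s). ennreal (indicator {0<..} s *
      exp_remainder k (s * norm (f (fst p) - g (snd p)) ^ 2) * s powr (- 1 - \<alpha> / 2)))"
  have [measurable]: "F \<in> borel_measurable ((M \<Otimes>\<^sub>M N) \<Otimes>\<^sub>M lborel)" unfolding F_def by measurable
  have J_eq: "ennreal (energy_int_map \<alpha> M f N g) =
      (\<integral>\<^sup>+p. ennreal (norm (f (fst p) - g (snd p)) powr \<alpha>) \<partial>(M \<Otimes>\<^sub>M N))"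
    unfolding energy_int_map_def using k
    by (intro nn_integral_eq_integral[symmetric] integrable_energy_int_map[OF PM PN mf mg momf momg]) auto
  have "(\<integral>\<^sup>+s. ennreal (remainder_profile k \<alpha> M f N g s) \<partial>lborel) =
      (\<integral>\<^sup>+s. (\<integral>\<^sup>+p. F (p, s) \<partial>(M \<Otimes>\<^sub>M N)) \<partial>lborel)"
    unfolding F_def by (simp add: ennreal_remainder_profile[OF k(1) PM PN mf mg momf momg])
  also have "\<dots> = (\<integral>\<^sup>+p. (\<integral>\<^sup>+s. F (p, s) \<partial>lborel) \<partial>(M \<Otimes>\<^sub>M N))"
    by (rule Q.Fubini) measurable
  also have "\<dots> = (\<integral>\<^sup>+p. ennreal (norm (f (fst p) - g (snd p)) powr \<alpha>) * remainder_const k (\<alpha> / 2) \<partial>(M \<Otimes>\<^sub>M N))"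
    unfolding F_def by (simp add: nn_integral_exp_remainder_representation)
  also have "\<dots> = ennreal (energy_int_map \<alpha> M f N g) * remainder_const k (\<alpha> / 2)"
    unfolding J_eq by (rule nn_integral_multc) measurable
  finally show ?thesis .
qed

lemma
  fixes f :: "'b \<Rightarrow> 'a::euclidean_space" and g :: "'c \<Rightarrow> 'a"
  assumes k: "real k < \<alpha> / 2" "\<alpha> / 2 < real k + 1"
    and PM: "prob_space M" and PN: "prob_space N"
    and mf[measurable]: "f \<in> borel_measurable M" and mg[measurable]: "g \<in> borel_measurable N"
    and momf: "integrable M (\<lambda>x. norm (f x) powr \<alpha>)" and momg: "integrable N (\<lambda>y. norm (g y) powr \<alpha>)"
  shows integrable_remainder_profile: "integrable lborel (remainder_profile k \<alpha> M f N g)"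
    and integral_remainder_profile: "integral\<^sup>L lborel (remainder_profile k \<alpha> M f N g) =
      energy_int_map \<alpha> M f N g * enn2real (remainder_const k (\<alpha> / 2))"
proof -
  interpret M: prob_space M by fact
  interpret N: prob_space N by fact
  interpret P: pair_prob_space M N by unfold_locales
  have measurable: "remainder_profile k \<alpha> M f N g \<in> borel_measurable lborel"
  proof -
    have "(\<lambda>(s, p). exp_remainder k (s * norm (f (fst p) - g (snd p)) ^ 2))
        \<in> borel_measurable (lborel \<Otimes>\<^sub>M (M \<Otimes>\<^sub>M N))"
      by measurable
    from P.borel_measurable_lebesgue_integral[OF this] show ?thesis
      unfolding remainder_profile_def by measurable
  qed
  have "0 \<le> energy_int_map \<alpha> M f N g" unfolding energy_int_map_def by (rule integral_nonneg_AE) simp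
  with remainder_const_finite[OF k]
  have nn: "(\<integral>\<^sup>+s. ennreal (remainder_profile k \<alpha> M f N g s) \<partial>lborel) =
      ennreal (energy_int_map \<alpha> M f N g * enn2real (remainder_const k (\<alpha> / 2)))"
    using k by (simp add: nn_integral_remainder_profile[OF _ _ PM PN mf mg momf momg]
        ennreal_mult'' enn2real_nonneg ennreal_enn2real_if less_top)
  show "integrable lborel (remainder_profile k \<alpha> M f N g)"
    by (intro integrableI_nn_integral_finite[OF measurable _ nn]) (simp add: remainder_profile_nonneg)
  show "integral\<^sup>L lborel (remainder_profile k \<alpha> M f N g) =
      energy_int_map \<alpha> M f N g * enn2real (remainder_const k (\<alpha> / 2))"
    using integral_eq_nn_integral[OF measurable] nn \<open>0 \<le> energy_int_map \<alpha> M f N g\<close>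
    by (simp add: remainder_profile_nonneg enn2real_nonneg)
qed

lemma integral_exp_remainder_expansion:
  fixes f :: "'b \<Rightarrow> 'a::euclidean_space" and g :: "'c \<Rightarrow> 'a"
  assumes PM: "prob_space M" and PN: "prob_space N"
    and mf[measurable]: "f \<in> borel_measurable M" and mg[measurable]: "g \<in> borel_measurable N"
    and momf: "integrable M (\<lambda>x. norm (f x) powr \<alpha>)" and momg: "integrable N (\<lambda>y. norm (g y) powr \<alpha>)"
    and k: "real (2 * k) \<le> \<alpha>" and s: "0 \<le> s"
  shows "(\<integral>p. exp_remainder k (s * norm (f (fst p) - g (snd p)) ^ 2) \<partial>(M \<Otimes>\<^sub>M N)) =
     (-1) ^ (k + 1) * ((\<integral>p. exp (- s * norm (f (fst p) - g (snd p)) ^ 2) \<partial>(M \<Otimes>\<^sub>M N)) -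
       (\<Sum>l<k+1. (- s) ^ l / fact l * (\<integral>p. norm (f (fst p) - g (snd p)) ^ (2 * l) \<partial>(M \<Otimes>\<^sub>M N))))"
proof -
  interpret M: prob_space M by fact
  interpret N: prob_space N by fact
  interpret P: pair_prob_space M N by unfold_locales
  have pointwise: "exp_remainder k (s * r ^ 2) =
      (-1) ^ (k + 1) * (exp (- s * r ^ 2) - (\<Sum>l<k+1. (- s) ^ l / fact l * r ^ (2 * l)))" for r
    unfolding exp_remainder_def
    by (simp add: power_minus[of "s * r ^ 2"] power_minus[of s] power_mult_distrib power_mult mult.assoc)
  have int_exp: "integrable (M \<Otimes>\<^sub>M N) (\<lambda>p. exp (- s * norm (f (fst p) - g (snd p)) ^ 2))"
    using s by (intro P.integrable_const_bound[where B=1]) auto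
  have int_power: "integrable (M \<Otimes>\<^sub>M N) (\<lambda>p. norm (f (fst p) - g (snd p)) ^ (2 * l))" if "l < k + 1" for l
    using that k by (intro integrable_norm_diff_power[OF PM PN mf mg momf momg]) auto
  have int_sum: "integrable (M \<Otimes>\<^sub>M N)
      (\<lambda>p. \<Sum>l<k+1. (- s) ^ l / fact l * norm (f (fst p) - g (snd p)) ^ (2 * l))"
    using int_power by (intro Bochner_Integration.integrable_sum integrable_mult_right) auto
  have "(\<integral>p. (\<Sum>l<k+1. (- s) ^ l / fact l * norm (f (fst p) - g (snd p)) ^ (2 * l)) \<partial>(M \<Otimes>\<^sub>M N)) =
      (\<Sum>l<k+1. (- s) ^ l / fact l * (\<integral>p. norm (f (fst p) - g (snd p)) ^ (2 * l) \<partial>(M \<Otimes>\<^sub>M N)))"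
    using int_power by (subst Bochner_Integration.integral_sum) auto
  then show ?thesis
    unfolding pointwise using Bochner_Integration.integral_diff[OF int_exp int_sum] by simp
qed

section \<open>Conditional positive definiteness of \<open>(-1)^(k+1) |x - y| powr \<alpha>\<close>\<close>

definition poly_moments_cancel ::
    "nat \<Rightarrow> ('i \<Rightarrow> 'b measure) \<Rightarrow> ('i \<Rightarrow> 'b \<Rightarrow> 'a::euclidean_space) \<Rightarrow> 'i set \<Rightarrow> ('i \<Rightarrow> real) \<Rightarrow> bool" where
  "poly_moments_cancel k M f S c \<longleftrightarrow>
     (\<forall>p. mpoly_deg_le k p \<longrightarrow> (\<Sum>i\<in>S. c i * (\<integral>x. p (f i x) \<partial>M i)) = 0)"

definition energy_form ::
    "real \<Rightarrow> ('i \<Rightarrow> 'b measure) \<Rightarrow> ('i \<Rightarrow> 'b \<Rightarrow> 'a::euclidean_space) \<Rightarrow> 'i set \<Rightarrow> ('i \<Rightarrow> real) \<Rightarrow> real" where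
  "energy_form \<alpha> M f S c = (\<Sum>i\<in>S. \<Sum>j\<in>S. c i * c j * energy_int_map \<alpha> (M i) (f i) (M j) (f j))"

lemma double_sum_quadratic_swap:
  fixes c :: "'i \<Rightarrow> real"
  shows "(\<Sum>i\<in>S. \<Sum>j\<in>S. c i * c j * (\<Sum>t\<in>T. a t i * b t j)) =
    (\<Sum>t\<in>T. (\<Sum>i\<in>S. c i * a t i) * (\<Sum>j\<in>S. c j * b t j))"
proof -
  have "(\<Sum>i\<in>S. \<Sum>j\<in>S. c i * c j * (\<Sum>t\<in>T. a t i * b t j)) =
      (\<Sum>i\<in>S. \<Sum>j\<in>S. \<Sum>t\<in>T. (c i * a t i) * (c j * b t j))"
    by (simp add: sum_distrib_left mult_ac)
  also have "\<dots> = (\<Sum>i\<in>S. \<Sum>t\<in>T. \<Sum>j\<in>S. (c i * a t i) * (c j * b t j))"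
    by (intro sum.cong refl sum.swap)
  also have "\<dots> = (\<Sum>t\<in>T. \<Sum>i\<in>S. \<Sum>j\<in>S. (c i * a t i) * (c j * b t j))"
    by (rule sum.swap)
  finally show ?thesis by (simp add: sum_product)
qed

lemma even_power_form_eq_0:
  fixes f :: "'i \<Rightarrow> 'b \<Rightarrow> 'a::euclidean_space"
  assumes "finite S" and P: "\<And>i. i \<in> S \<Longrightarrow> prob_space (M i)"
    and mf: "\<And>i. i \<in> S \<Longrightarrow> f i \<in> borel_measurable (M i)"
    and mom: "\<And>i. i \<in> S \<Longrightarrow> integrable (M i) (\<lambda>x. norm (f i x) powr \<alpha>)"
    and cancel: "poly_moments_cancel k M f S c"
    and "l \<le> k" and "real (2 * k) \<le> \<alpha>"
  shows "(\<Sum>i\<in>S. \<Sum>j\<in>S. c i * c j * (\<integral>p. norm (f i (fst p) - f j (snd p)) ^ (2 * l) \<partial>(M i \<Otimes>\<^sub>M M j))) = 0"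
proof -
  obtain T :: "(nat \<Rightarrow> 'a \<times> nat) set" and A B da db where T: "finite T"
    "\<And>t. t \<in> T \<Longrightarrow> mpoly_deg_le (da t) (A t) \<and> mpoly_deg_le (db t) (B t) \<and> da t + db t = 2 * l"
    "\<And>u v::'a. norm (u - v) ^ (2 * l) = (\<Sum>t\<in>T. A t u * B t v)"
    using norm_diff_power_expansion[where 'a='a and l=l] by blast
  have int: "integrable (M i) (\<lambda>x. A t (f i x))" "integrable (M i) (\<lambda>x. B t (f i x))"
    if "i \<in> S" "t \<in> T" for i t
    using that T(2)[OF that(2)] assms(6,7)
    by (auto intro!: integrable_mpoly_comp[OF P mf mom, of i])
  have "(\<integral>p. norm (f i (fst p) - f j (snd p)) ^ (2 * l) \<partial>(M i \<Otimes>\<^sub>M M j)) =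
      (\<Sum>t\<in>T. (\<integral>x. A t (f i x) \<partial>M i) * (\<integral>y. B t (f j y) \<partial>M j))" if "i \<in> S" "j \<in> S" for i j
  proof -
    note pair = integrable_pair_mult[OF P P int(1) int(2)] integral_pair_mult[OF P P int(1) int(2)]
    show ?thesis
      unfolding T(3) using that pair by (simp add: Bochner_Integration.integral_sum)
  qed
  then have "(\<Sum>i\<in>S. \<Sum>j\<in>S. c i * c j * (\<integral>p. norm (f i (fst p) - f j (snd p)) ^ (2 * l) \<partial>(M i \<Otimes>\<^sub>M M j))) =
      (\<Sum>t\<in>T. (\<Sum>i\<in>S. c i * (\<integral>x. A t (f i x) \<partial>M i)) * (\<Sum>j\<in>S. c j * (\<integral>y. B t (f j y) \<partial>M j)))"
    by (simp add: double_sum_quadratic_swap[symmetric])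
  also have "\<dots> = 0"
  proof (intro sum.neutral ballI)
    fix t assume "t \<in> T"
    then have "da t \<le> k \<or> db t \<le> k" using T(2) assms(6) by fastforce
    then have "mpoly_deg_le k (A t) \<or> mpoly_deg_le k (B t)"
      using T(2)[OF \<open>t \<in> T\<close>] mpoly_deg_le_mono by blast
    then show "(\<Sum>i\<in>S. c i * (\<integral>x. A t (f i x) \<partial>M i)) * (\<Sum>j\<in>S. c j * (\<integral>y. B t (f j y) \<partial>M j)) = 0"
      using cancel unfolding poly_moments_cancel_def by auto
  qed
  finally show ?thesis .
qed

lemma energy_form_eq_0_even:
  fixes f :: "'i \<Rightarrow> 'b \<Rightarrow> 'a::euclidean_space"
  assumes "\<alpha> = 2 * real k" "0 < \<alpha>" "finite S" "\<And>i. i \<in> S \<Longrightarrow> prob_space (M i)"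
    "\<And>i. i \<in> S \<Longrightarrow> f i \<in> borel_measurable (M i)"
    "\<And>i. i \<in> S \<Longrightarrow> integrable (M i) (\<lambda>x. norm (f i x) powr \<alpha>)"
    "poly_moments_cancel k M f S c"
  shows "energy_form \<alpha> M f S c = 0"
proof -
  have "0 < k" using assms(1,2) by simp
  then have "norm u powr \<alpha> = norm u ^ (2 * k)" for u :: 'a
    using assms(1) by (cases "u = 0") (simp_all add: powr_realpow[symmetric])
  then show ?thesis
    unfolding energy_form_def energy_int_map_def
    using even_power_form_eq_0[OF assms(3-7) order.refl] assms(1) by simp
qed

lemma quadratic_sum_linear_combination:
  fixes c :: "'i \<Rightarrow> real"
  shows "(\<Sum>i\<in>S. \<Sum>j\<in>S. c i * c j * (\<Sum>l\<in>L. a l * P i j l)) =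
    (\<Sum>l\<in>L. a l * (\<Sum>i\<in>S. \<Sum>j\<in>S. c i * c j * P i j l))"
proof -
  have "(\<Sum>i\<in>S. \<Sum>j\<in>S. c i * c j * (\<Sum>l\<in>L. a l * P i j l)) =
      (\<Sum>i\<in>S. \<Sum>l\<in>L. \<Sum>j\<in>S. a l * (c i * c j * P i j l))"
    by (simp add: sum_distrib_left mult_ac sum.swap[of _ S L])
  also have "\<dots> = (\<Sum>l\<in>L. a l * (\<Sum>i\<in>S. \<Sum>j\<in>S. c i * c j * P i j l))"
    by (subst sum.swap) (simp add: sum_distrib_left)
  finally show ?thesis .
qed

lemma exp_remainder_form_nonneg:
  fixes f :: "'i \<Rightarrow> 'b \<Rightarrow> 'a::euclidean_space"
  assumes fin: "finite S" and P: "\<And>i. i \<in> S \<Longrightarrow> prob_space (M i)"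
    and mf: "\<And>i. i \<in> S \<Longrightarrow> f i \<in> borel_measurable (M i)"
    and mom: "\<And>i. i \<in> S \<Longrightarrow> integrable (M i) (\<lambda>x. norm (f i x) powr \<alpha>)"
    and cancel: "poly_moments_cancel k M f S c" and k: "real (2 * k) \<le> \<alpha>" and s: "0 < s"
  shows "0 \<le> (-1) ^ (k + 1) * (\<Sum>i\<in>S. \<Sum>j\<in>S. c i * c j *
    (\<integral>p. exp_remainder k (s * norm (f i (fst p) - f j (snd p)) ^ 2) \<partial>(M i \<Otimes>\<^sub>M M j)))"
proof -
  define G where "G = (\<lambda>i j. \<integral>p. exp (- s * norm (f i (fst p) - f j (snd p)) ^ 2) \<partial>(M i \<Otimes>\<^sub>M M j))"
  define Q where "Q = (\<lambda>i j l. \<integral>p. norm (f i (fst p) - f j (snd p)) ^ (2 * l) \<partial>(M i \<Otimes>\<^sub>M M j))"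
  have "(\<Sum>i\<in>S. \<Sum>j\<in>S. c i * c j *
      (\<integral>p. exp_remainder k (s * norm (f i (fst p) - f j (snd p)) ^ 2) \<partial>(M i \<Otimes>\<^sub>M M j))) =
      (\<Sum>i\<in>S. \<Sum>j\<in>S. c i * c j * ((-1) ^ (k + 1) * (G i j - (\<Sum>l<k+1. (- s) ^ l / fact l * Q i j l))))"
    unfolding G_def Q_def using s
    by (intro sum.cong refl) (simp add: integral_exp_remainder_expansion[OF P P mf mf mom mom k])
  also have "\<dots> = (-1) ^ (k + 1) * (\<Sum>i\<in>S. \<Sum>j\<in>S. c i * c j * G i j) -
      (-1) ^ (k + 1) * (\<Sum>i\<in>S. \<Sum>j\<in>S. c i * c j * (\<Sum>l<k+1. (- s) ^ l / fact l * Q i j l))"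
  proof -
    have distrib: "c i * c j * ((-1) ^ (k + 1) * (G i j - X)) =
        (-1) ^ (k + 1) * (c i * c j * G i j) - (-1) ^ (k + 1) * (c i * c j * X)" for i j and X :: real
      by (simp add: algebra_simps)
    show ?thesis by (simp only: distrib sum_subtractf sum_distrib_left[symmetric])
  qed
  also have "(\<Sum>i\<in>S. \<Sum>j\<in>S. c i * c j * (\<Sum>l<k+1. (- s) ^ l / fact l * Q i j l)) =
      (\<Sum>l<k+1. (- s) ^ l / fact l * (\<Sum>i\<in>S. \<Sum>j\<in>S. c i * c j * Q i j l))"
    by (rule quadratic_sum_linear_combination)
  also have "\<dots> = 0"
    using even_power_form_eq_0[OF fin P mf mom cancel _ k] unfolding Q_def by simp
  finally show ?thesis
    using gauss_kernel_pos_def[OF fin P mf s, where c=c] unfolding G_def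
    by (simp add: mult.assoc[symmetric] power_mult_distrib[symmetric])
qed

lemma energy_form_nonneg_not_even:
  fixes f :: "'i \<Rightarrow> 'b \<Rightarrow> 'a::euclidean_space"
  assumes k: "real k < \<alpha> / 2" "\<alpha> / 2 < real k + 1"
    and fin: "finite S" and P: "\<And>i. i \<in> S \<Longrightarrow> prob_space (M i)"
    and mf: "\<And>i. i \<in> S \<Longrightarrow> f i \<in> borel_measurable (M i)"
    and mom: "\<And>i. i \<in> S \<Longrightarrow> integrable (M i) (\<lambda>x. norm (f i x) powr \<alpha>)"
    and cancel: "poly_moments_cancel k M f S c"
  shows "0 \<le> (-1) ^ (k + 1) * energy_form \<alpha> M f S c"
proof -
  define C where "C = enn2real (remainder_const k (\<alpha> / 2))"
  have "0 < C"
    unfolding C_def using remainder_const_pos remainder_const_finite[OF k]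
    by (simp add: enn2real_positive_iff)
  define W where "W = (\<lambda>i j. remainder_profile k \<alpha> (M i) (f i) (M j) (f j))"
  note representation = integrable_remainder_profile[OF k P P mf mf mom mom]
    integral_remainder_profile[OF k P P mf mf mom mom]
  have "(-1) ^ (k + 1) * energy_form \<alpha> M f S c * C =
      (-1) ^ (k + 1) * (\<Sum>i\<in>S. \<Sum>j\<in>S. c i * c j * integral\<^sup>L lborel (W i j))"
    unfolding energy_form_def W_def C_def
    by (simp add: representation sum_distrib_left sum_distrib_right mult_ac)
  also have "\<dots> = (\<integral>s. (-1) ^ (k + 1) * (\<Sum>i\<in>S. \<Sum>j\<in>S. c i * c j * W i j s) \<partial>lborel)"
    unfolding W_def using representation by (simp add: Bochner_Integration.integral_sum)
  also have "\<dots> \<ge> 0"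
  proof (intro integral_nonneg_AE AE_I2)
    fix s :: real
    show "0 \<le> (-1) ^ (k + 1) * (\<Sum>i\<in>S. \<Sum>j\<in>S. c i * c j * W i j s)"
    proof (cases "0 < s")
      case True
      have eq: "(-1) ^ (k + 1) * (\<Sum>i\<in>S. \<Sum>j\<in>S. c i * c j * W i j s) = s powr (- 1 - \<alpha> / 2) *
          ((-1) ^ (k + 1) * (\<Sum>i\<in>S. \<Sum>j\<in>S. c i * c j *
            (\<integral>p. exp_remainder k (s * norm (f i (fst p) - f j (snd p)) ^ 2) \<partial>(M i \<Otimes>\<^sub>M M j))))"
        unfolding W_def remainder_profile_def using True by (simp add: sum_distrib_left mult_ac)
      have "real (2 * k) \<le> \<alpha>" using k(1) by simp
      from exp_remainder_form_nonneg[OF fin P mf mom cancel this True]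
      show ?thesis unfolding eq by (rule mult_nonneg_nonneg[OF powr_ge_zero])
    qed (simp add: W_def remainder_profile_def)
  qed
  finally have "0 * C \<le> (-1) ^ (k + 1) * energy_form \<alpha> M f S c * C" by simp
  then show ?thesis using \<open>0 < C\<close> by (simp only: mult_le_cancel_right_pos)
qed

lemma energy_form_nonneg:
  fixes f :: "'i \<Rightarrow> 'b \<Rightarrow> 'a::euclidean_space"
  assumes "0 < \<alpha>" and fin: "finite S" and P: "\<And>i. i \<in> S \<Longrightarrow> prob_space (M i)"
    and mf: "\<And>i. i \<in> S \<Longrightarrow> f i \<in> borel_measurable (M i)"
    and mom: "\<And>i. i \<in> S \<Longrightarrow> integrable (M i) (\<lambda>x. norm (f i x) powr \<alpha>)"
    and cancel: "poly_moments_cancel (nat \<lfloor>\<alpha> / 2\<rfloor>) M f S c"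
  shows "0 \<le> (-1) ^ (nat \<lfloor>\<alpha> / 2\<rfloor> + 1) * energy_form \<alpha> M f S c"
proof -
  define k where "k = nat \<lfloor>\<alpha> / 2\<rfloor>"
  have "real k = real_of_int \<lfloor>\<alpha> / 2\<rfloor>" unfolding k_def using assms(1) by simp
  then have "real k \<le> \<alpha> / 2" "\<alpha> / 2 < real k + 1"
    using of_int_floor_le[of "\<alpha> / 2"] real_of_int_floor_add_one_gt[of "\<alpha> / 2"] by linarith+
  then consider "\<alpha> = 2 * real k" | "real k < \<alpha> / 2" "\<alpha> / 2 < real k + 1"
    by (cases "\<alpha> = 2 * real k") auto
  then show ?thesis
  proof cases
    case 1
    then show ?thesis
      using energy_form_eq_0_even[OF 1 assms(1-5)] cancel unfolding k_def by simp
  next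
    case 2
    then show ?thesis
      using energy_form_nonneg_not_even[OF 2 fin P mf mom] cancel unfolding k_def by simp
  qed
qed

section \<open>The energy distance as a seminorm\<close>

definition law_with_moment :: "real \<Rightarrow> 'a::euclidean_space measure \<Rightarrow> bool" where
  "law_with_moment \<alpha> \<mu> \<longleftrightarrow> prob_space \<mu> \<and> sets \<mu> = sets borel \<and> integrable \<mu> (\<lambda>x. norm x powr \<alpha>)"

lemma law_with_momentD:
  assumes "law_with_moment \<alpha> \<mu>"
  shows "prob_space \<mu>" "sets \<mu> = sets borel" "integrable \<mu> (\<lambda>x. norm x powr \<alpha>)"
    "(\<lambda>x. x) \<in> borel_measurable \<mu>"
  using assms measurable_ident_sets[of \<mu> borel] unfolding law_with_moment_def by auto

text \<open>The bilinear form of which \<open>energy_sq\<close> is the quadratic form: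
  \<open>energy_inner \<alpha> P Q P' Q'\<close> pairs the signed measures \<open>P - Q\<close> and \<open>P' - Q'\<close>.\<close>
definition energy_inner ::
    "real \<Rightarrow> 'a::euclidean_space measure \<Rightarrow> 'a measure \<Rightarrow> 'a measure \<Rightarrow> 'a measure \<Rightarrow> real" where
  "energy_inner \<alpha> P Q P' Q' = (-1) ^ (nat \<lfloor>\<alpha> / 2\<rfloor> + 1) *
     (energy_int \<alpha> P P' - energy_int \<alpha> P Q' - energy_int \<alpha> Q P' + energy_int \<alpha> Q Q')"

lemma energy_quadratic_nonneg:
  assumes "0 < \<alpha>" and laws: "law_with_moment \<alpha> P" "law_with_moment \<alpha> Q"
      "law_with_moment \<alpha> P'" "law_with_moment \<alpha> Q'"
    and eq: "equal_moments_upto (nat \<lfloor>\<alpha> / 2\<rfloor>) P Q" "equal_moments_upto (nat \<lfloor>\<alpha> / 2\<rfloor>) P' Q'"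
  shows "0 \<le> s\<^sup>2 * energy_sq \<alpha> P Q + 2 * s * t * energy_inner \<alpha> P Q P' Q' + t\<^sup>2 * energy_sq \<alpha> P' Q'"
proof -
  define M where "M = (\<lambda>i. [P, Q, P', Q'] ! i)"
  define c where "c = (\<lambda>i. [s, - s, t, - t] ! i)"
  define S where "S = {0, 1, 2, 3::nat}"
  have law: "law_with_moment \<alpha> (M i)" if "i \<in> S" for i
    using that laws unfolding S_def M_def by auto
  note M = law_with_momentD[OF law]
  have "poly_moments_cancel (nat \<lfloor>\<alpha> / 2\<rfloor>) M (\<lambda>_ x. x) S c"
    unfolding poly_moments_cancel_def S_def M_def c_def
    using equal_moments_upto_integral_mpoly[OF eq(1) order.refl]
      equal_moments_upto_integral_mpoly[OF eq(2) order.refl]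
    by (simp add: algebra_simps)
  from energy_form_nonneg[OF assms(1) _ M(1) M(4) M(3) this]
  have "0 \<le> (-1) ^ (nat \<lfloor>\<alpha> / 2\<rfloor> + 1) * energy_form \<alpha> M (\<lambda>_ x. x) S c"
    by (simp add: S_def)
  also have "\<dots> = s\<^sup>2 * energy_sq \<alpha> P Q + 2 * s * t * energy_inner \<alpha> P Q P' Q' + t\<^sup>2 * energy_sq \<alpha> P' Q'"
  proof -
    have sym: "energy_int \<alpha> (M j) (M i) = energy_int \<alpha> (M i) (M j)" if "i \<in> S" "j \<in> S" for i j
      using that by (intro energy_int_commute M)
    have form: "energy_form \<alpha> M (\<lambda>_ x. x) S c =
        s\<^sup>2 * (energy_int \<alpha> P P - 2 * energy_int \<alpha> P Q + energy_int \<alpha> Q Q) +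
        2 * s * t * (energy_int \<alpha> P P' - energy_int \<alpha> P Q' - energy_int \<alpha> Q P' + energy_int \<alpha> Q Q') +
        t\<^sup>2 * (energy_int \<alpha> P' P' - 2 * energy_int \<alpha> P' Q' + energy_int \<alpha> Q' Q')"
      using sym[of 0 1] sym[of 0 2] sym[of 0 3] sym[of 1 2] sym[of 1 3] sym[of 2 3]
      unfolding energy_form_def energy_int_map_id
      by (simp add: S_def M_def c_def power2_eq_square algebra_simps)
    show ?thesis
      unfolding form energy_sq_def energy_inner_def by (simp add: algebra_simps)
  qed
  finally show ?thesis .
qed

lemma energy_sq_nonneg:
  assumes "0 < \<alpha>" "law_with_moment \<alpha> P" "law_with_moment \<alpha> Q"
    "equal_moments_upto (nat \<lfloor>\<alpha> / 2\<rfloor>) P Q"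
  shows "0 \<le> energy_sq \<alpha> P Q"
  using energy_quadratic_nonneg[OF assms(1-3) assms(2-3) assms(4) assms(4), of 1 0] by simp

lemma quadratic_form_cauchy_schwarz:
  fixes X Y Z :: real
  assumes q: "\<And>s t. 0 \<le> s\<^sup>2 * X + 2 * s * t * Z + t\<^sup>2 * Y"
  shows "Z \<le> sqrt X * sqrt Y"
proof (rule ccontr)
  assume "\<not> ?thesis"
  then have Z: "sqrt X * sqrt Y < Z" by simp
  have X: "0 \<le> X" and Y: "0 \<le> Y" using q[of 1 0] q[of 0 1] by simp_all
  consider "X = 0" | "Y = 0" | "0 < X" "0 < Y" using X Y by linarith
  then show False
  proof cases
    case 1
    then have "0 < Z" using Z by simp
    then show False using q[of "(Y + 1) / Z" "- 1"] 1 mult_nonneg_nonneg[OF Y, of Z]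
      by (simp add: field_simps power2_eq_square)
  next
    case 2
    then have "0 < Z" using Z by simp
    then show False using q[of "- 1" "(X + 1) / Z"] 2 mult_nonneg_nonneg[OF X, of Z]
      by (simp add: field_simps power2_eq_square)
  next
    case 3
    have "0 \<le> (sqrt Y)\<^sup>2 * X + 2 * sqrt Y * - sqrt X * Z + (- sqrt X)\<^sup>2 * Y" by (rule q)
    also have "\<dots> = 2 * (sqrt X * sqrt Y) * (sqrt X * sqrt Y - Z)"
      using X Y by (simp add: algebra_simps power2_eq_square)
    also have "\<dots> < 0" using 3 Z by (intro mult_pos_neg) auto
    finally show False by simp
  qed
qed

lemma energy_inner_le:
  assumes "0 < \<alpha>" "law_with_moment \<alpha> P" "law_with_moment \<alpha> Q"
    "law_with_moment \<alpha> P'" "law_with_moment \<alpha> Q'"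
    "equal_moments_upto (nat \<lfloor>\<alpha> / 2\<rfloor>) P Q" "equal_moments_upto (nat \<lfloor>\<alpha> / 2\<rfloor>) P' Q'"
  shows "energy_inner \<alpha> P Q P' Q' \<le> energy_dist \<alpha> P Q * energy_dist \<alpha> P' Q'"
  unfolding energy_dist_def
  by (rule quadratic_form_cauchy_schwarz) (use energy_quadratic_nonneg[OF assms] in \<open>simp add: mult_ac\<close>)

lemma energy_dist_triangle:
  assumes "0 < \<alpha>" "law_with_moment \<alpha> A" "law_with_moment \<alpha> B" "law_with_moment \<alpha> C"
    "equal_moments_upto (nat \<lfloor>\<alpha> / 2\<rfloor>) A C" "equal_moments_upto (nat \<lfloor>\<alpha> / 2\<rfloor>) C B"
  shows "energy_dist \<alpha> A B \<le> energy_dist \<alpha> A C + energy_dist \<alpha> C B"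
proof -
  have nonneg: "0 \<le> energy_sq \<alpha> A C" "0 \<le> energy_sq \<alpha> C B"
    using energy_sq_nonneg[OF assms(1,2,4,5)] energy_sq_nonneg[OF assms(1,4,3,6)] .
  have "energy_sq \<alpha> A B = energy_sq \<alpha> A C + 2 * energy_inner \<alpha> A C C B + energy_sq \<alpha> C B"
    unfolding energy_sq_def energy_inner_def by (simp add: algebra_simps)
  also have "\<dots> \<le> energy_sq \<alpha> A C + 2 * (energy_dist \<alpha> A C * energy_dist \<alpha> C B) + energy_sq \<alpha> C B"
    using energy_inner_le[OF assms(1,2,4,4,3,5,6)] by simp
  also have "\<dots> = (energy_dist \<alpha> A C + energy_dist \<alpha> C B)\<^sup>2"
    unfolding energy_dist_def power2_sum using nonneg by simp
  finally have "sqrt (energy_sq \<alpha> A B) \<le> sqrt ((energy_dist \<alpha> A C + energy_dist \<alpha> C B)\<^sup>2)"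
    by (rule real_sqrt_le_mono)
  then show ?thesis
    unfolding energy_dist_def[of \<alpha> A B] using nonneg by (simp add: energy_dist_def)
qed

section \<open>Convex convolution\<close>

lemma conv_comb_def':
  "conv_comb lam \<mu> \<rho> = distr (\<mu> \<Otimes>\<^sub>M \<rho>) borel (\<lambda>z. sqrt lam *\<^sub>R fst z + sqrt (1 - lam) *\<^sub>R snd z)"
  unfolding conv_comb_def by (simp add: case_prod_beta')

lemma integrable_norm_powr_affine_pair:
  assumes "law_with_moment \<alpha> \<mu>" "law_with_moment \<alpha> \<rho>" "0 \<le> \<alpha>"
  shows "integrable (\<mu> \<Otimes>\<^sub>M \<rho>) (\<lambda>z. norm (a *\<^sub>R fst z + b *\<^sub>R snd z) powr \<alpha>)"
proof -
  note \<mu> = law_with_momentD[OF assms(1)] and \<rho> = law_with_momentD[OF assms(2)]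
  have "integrable \<mu> (\<lambda>x. norm (a *\<^sub>R x) powr \<alpha>)" "integrable \<rho> (\<lambda>y. norm (- (b *\<^sub>R y)) powr \<alpha>)"
    using \<mu>(3) \<rho>(3) by (simp_all add: powr_mult)
  from integrable_energy_int_map[OF \<mu>(1) \<rho>(1) _ _ this assms(3)] \<mu>(4) \<rho>(4)
  show ?thesis by simp
qed

lemma law_with_moment_conv_comb:
  assumes "law_with_moment \<alpha> \<mu>" "law_with_moment \<alpha> \<rho>" "0 \<le> \<alpha>"
  shows "law_with_moment \<alpha> (conv_comb lam \<mu> \<rho>)"
proof -
  note \<mu> = law_with_momentD[OF assms(1)] and \<rho> = law_with_momentD[OF assms(2)]
  interpret pair_prob_space \<mu> \<rho> using \<mu>(1) \<rho>(1) by (simp add: pair_prob_space_def pair_sigma_finite_def prob_space_imp_sigma_finite)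
  have [measurable]: "(\<lambda>z. sqrt lam *\<^sub>R fst z + sqrt (1 - lam) *\<^sub>R snd z) \<in> \<mu> \<Otimes>\<^sub>M \<rho> \<rightarrow>\<^sub>M borel"
    using \<mu>(4) \<rho>(4) by measurable
  show ?thesis
    unfolding law_with_moment_def conv_comb_def'
    using integrable_norm_powr_affine_pair[OF assms]
    by (simp add: prob_space_distr integrable_distr_eq)
qed

lemma conv_comb_commute:
  assumes "prob_space \<mu>" "prob_space \<rho>" "sets \<mu> = sets borel" "sets \<rho> = sets borel"
  shows "conv_comb lam \<mu> \<rho> = conv_comb (1 - lam) \<rho> \<mu>"
proof -
  interpret pair_sigma_finite \<rho> \<mu>
    using assms(1,2) by (simp add: pair_sigma_finite_def prob_space_imp_sigma_finite)
  have [measurable_cong]: "sets \<mu> = sets borel" "sets \<rho> = sets borel" by fact+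
  have "conv_comb (1 - lam) \<rho> \<mu> = distr (distr (\<mu> \<Otimes>\<^sub>M \<rho>) (\<rho> \<Otimes>\<^sub>M \<mu>) (\<lambda>(x, y). (y, x))) borel
      (\<lambda>z. sqrt (1 - lam) *\<^sub>R fst z + sqrt lam *\<^sub>R snd z)"
    unfolding conv_comb_def' distr_pair_swap[symmetric] by simp
  also have "\<dots> = conv_comb lam \<mu> \<rho>"
    unfolding conv_comb_def' by (subst distr_distr) (auto simp: comp_def case_prod_beta' add.commute)
  finally show ?thesis ..
qed

lemma integral_conv_comb:
  fixes g :: "'a::euclidean_space \<Rightarrow> real"
  assumes "prob_space \<mu>" "prob_space \<rho>" "sets \<mu> = sets borel" "sets \<rho> = sets borel"
    and g: "g \<in> borel_measurable borel"
    and int: "integrable (\<mu> \<Otimes>\<^sub>M \<rho>) (\<lambda>z. g (sqrt lam *\<^sub>R fst z + sqrt (1 - lam) *\<^sub>R snd z))"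
  shows "(\<integral>x. g x \<partial>conv_comb lam \<mu> \<rho>) = (\<integral>y. (\<integral>x. g (sqrt lam *\<^sub>R x + sqrt (1 - lam) *\<^sub>R y) \<partial>\<mu>) \<partial>\<rho>)"
proof -
  interpret pair_prob_space \<mu> \<rho>
    using assms(1,2) by (simp add: pair_prob_space_def pair_sigma_finite_def prob_space_imp_sigma_finite)
  have [measurable_cong]: "sets \<mu> = sets borel" "sets \<rho> = sets borel" by fact+
  have "(\<integral>x. g x \<partial>conv_comb lam \<mu> \<rho>) = (\<integral>z. g (sqrt lam *\<^sub>R fst z + sqrt (1 - lam) *\<^sub>R snd z) \<partial>(\<mu> \<Otimes>\<^sub>M \<rho>))"
  proof -
    have m: "(\<lambda>z. sqrt lam *\<^sub>R fst z + sqrt (1 - lam) *\<^sub>R snd z) \<in> \<mu> \<Otimes>\<^sub>M \<rho> \<rightarrow>\<^sub>M (borel :: 'a measure)"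
      by measurable
    show ?thesis unfolding conv_comb_def' integral_distr[OF m g] ..
  qed
  also have "\<dots> = (\<integral>y. (\<integral>x. g (sqrt lam *\<^sub>R x + sqrt (1 - lam) *\<^sub>R y) \<partial>\<mu>) \<partial>\<rho>)"
    using integral_snd[of "\<lambda>x y. g (sqrt lam *\<^sub>R x + sqrt (1 - lam) *\<^sub>R y)"] int
    by (simp add: case_prod_beta')
  finally show ?thesis .
qed

lemma equal_moments_upto_conv_comb_left:
  assumes "law_with_moment \<alpha> \<mu>" "law_with_moment \<alpha> \<nu>" "law_with_moment \<alpha> \<rho>"
    and eq: "equal_moments_upto l \<mu> \<nu>" and "k \<le> l" "real k \<le> \<alpha>"
  shows "equal_moments_upto k (conv_comb lam \<mu> \<rho>) (conv_comb lam \<nu> \<rho>)"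
  unfolding equal_moments_upto_def
proof (intro allI impI conjI)
  fix \<beta> :: "'a \<Rightarrow> nat" assume "(\<Sum>b\<in>Basis. \<beta> b) \<le> k"
  then have deg: "total_degree \<beta> \<le> k" by (simp add: total_degree_def)
  have "0 \<le> \<alpha>" using assms(6) of_nat_0_le_iff order.trans by blast
  have int: "integrable (\<mu>' \<Otimes>\<^sub>M \<rho>) (\<lambda>z. monomial \<beta> (sqrt lam *\<^sub>R fst z + sqrt (1 - lam) *\<^sub>R snd z))"
    if "law_with_moment \<alpha> \<mu>'" for \<mu>'
  proof (rule integrable_mpoly_comp[OF _ _ _ _ mpoly_deg_le_mono[OF mpoly_deg_le_monomial deg]])
    note \<mu>' = law_with_momentD[OF that] and \<rho> = law_with_momentD[OF assms(3)]
    show "prob_space (\<mu>' \<Otimes>\<^sub>M \<rho>)" by (intro prob_space_pair \<mu>'(1) \<rho>(1))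
    show "(\<lambda>z. sqrt lam *\<^sub>R fst z + sqrt (1 - lam) *\<^sub>R snd z) \<in> borel_measurable (\<mu>' \<Otimes>\<^sub>M \<rho>)"
      using \<mu>'(4) \<rho>(4) by measurable
  qed (use integrable_norm_powr_affine_pair[OF that assms(3) \<open>0 \<le> \<alpha>\<close>] assms(6) in auto)
  have meas: "(\<lambda>z. sqrt lam *\<^sub>R fst z + sqrt (1 - lam) *\<^sub>R snd z) \<in> \<mu>' \<Otimes>\<^sub>M \<rho> \<rightarrow>\<^sub>M borel"
    if "law_with_moment \<alpha> \<mu>'" for \<mu>'
    using law_with_momentD(4)[OF that] law_with_momentD(4)[OF assms(3)] by measurable
  show "integrable (conv_comb lam \<mu> \<rho>) (monomial \<beta>)" "integrable (conv_comb lam \<nu> \<rho>) (monomial \<beta>)"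
    unfolding conv_comb_def' using int[OF assms(1)] int[OF assms(2)]
    by (simp_all add: integrable_distr_eq[OF meas[OF assms(1)]] integrable_distr_eq[OF meas[OF assms(2)]])
  have inner: "(\<integral>x. monomial \<beta> (sqrt lam *\<^sub>R x + sqrt (1 - lam) *\<^sub>R y) \<partial>\<mu>) =
      (\<integral>x. monomial \<beta> (sqrt lam *\<^sub>R x + sqrt (1 - lam) *\<^sub>R y) \<partial>\<nu>)" for y
    by (intro equal_moments_upto_integral_mpoly[OF eq \<open>k \<le> l\<close>] mpoly_deg_le_compose_affine
        mpoly_deg_le_mono[OF mpoly_deg_le_monomial deg])
  note \<mu> = law_with_momentD[OF assms(1)] and \<nu> = law_with_momentD[OF assms(2)]
    and \<rho> = law_with_momentD[OF assms(3)]
  have "(\<integral>x. monomial \<beta> x \<partial>conv_comb lam \<mu> \<rho>) =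
      (\<integral>y. (\<integral>x. monomial \<beta> (sqrt lam *\<^sub>R x + sqrt (1 - lam) *\<^sub>R y) \<partial>\<mu>) \<partial>\<rho>)"
    by (rule integral_conv_comb[OF \<mu>(1) \<rho>(1) \<mu>(2) \<rho>(2) _ int[OF assms(1)]]) simp
  also have "\<dots> = (\<integral>y. (\<integral>x. monomial \<beta> (sqrt lam *\<^sub>R x + sqrt (1 - lam) *\<^sub>R y) \<partial>\<nu>) \<partial>\<rho>)"
    by (simp only: inner)
  also have "\<dots> = (\<integral>x. monomial \<beta> x \<partial>conv_comb lam \<nu> \<rho>)"
    by (rule integral_conv_comb[OF \<nu>(1) \<rho>(1) \<nu>(2) \<rho>(2) _ int[OF assms(2)], symmetric]) simp
  finally show "(\<integral>x. monomial \<beta> x \<partial>conv_comb lam \<mu> \<rho>) = (\<integral>x. monomial \<beta> x \<partial>conv_comb lam \<nu> \<rho>)" .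
qed

lemma nn_integral_pair_pair:
  fixes G :: "'a \<times> 'b \<times> 'c \<times> 'd \<Rightarrow> ennreal"
  assumes "sigma_finite_measure M2" "sigma_finite_measure M3" "sigma_finite_measure M4"
    and [measurable]: "G \<in> borel_measurable (M1 \<Otimes>\<^sub>M (M2 \<Otimes>\<^sub>M (M3 \<Otimes>\<^sub>M M4)))"
  shows "(\<integral>\<^sup>+p. G (fst (fst p), snd (fst p), fst (snd p), snd (snd p)) \<partial>((M1 \<Otimes>\<^sub>M M2) \<Otimes>\<^sub>M (M3 \<Otimes>\<^sub>M M4))) =
    (\<integral>\<^sup>+x. \<integral>\<^sup>+q. \<integral>\<^sup>+y. \<integral>\<^sup>+q'. G (x, q, y, q') \<partial>M4 \<partial>M3 \<partial>M2 \<partial>M1)"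
proof -
  interpret M2: sigma_finite_measure M2 by fact
  interpret M34: pair_sigma_finite M3 M4 using assms(2,3) by (simp add: pair_sigma_finite_def)
  have "(\<integral>\<^sup>+p. G (fst (fst p), snd (fst p), fst (snd p), snd (snd p)) \<partial>((M1 \<Otimes>\<^sub>M M2) \<Otimes>\<^sub>M (M3 \<Otimes>\<^sub>M M4))) =
      (\<integral>\<^sup>+u. \<integral>\<^sup>+v. G (fst u, snd u, fst v, snd v) \<partial>(M3 \<Otimes>\<^sub>M M4) \<partial>(M1 \<Otimes>\<^sub>M M2))"
    using sigma_finite_measure.nn_integral_fst[OF sigma_finite_pair_measure[OF assms(2,3)],
        of "\<lambda>p. G (fst (fst p), snd (fst p), fst (snd p), snd (snd p))" "M1 \<Otimes>\<^sub>M M2"]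
    by simp
  also have "\<dots> = (\<integral>\<^sup>+u. \<integral>\<^sup>+y. \<integral>\<^sup>+q'. G (fst u, snd u, y, q') \<partial>M4 \<partial>M3 \<partial>(M1 \<Otimes>\<^sub>M M2))"
  proof (rule nn_integral_cong)
    fix u assume "u \<in> space (M1 \<Otimes>\<^sub>M M2)"
    then have "(\<lambda>v. G (fst u, snd u, fst v, snd v)) \<in> borel_measurable (M3 \<Otimes>\<^sub>M M4)"
      by measurable
    from sigma_finite_measure.nn_integral_fst[OF assms(3) this] show
      "(\<integral>\<^sup>+v. G (fst u, snd u, fst v, snd v) \<partial>(M3 \<Otimes>\<^sub>M M4)) =
        (\<integral>\<^sup>+y. \<integral>\<^sup>+q'. G (fst u, snd u, y, q') \<partial>M4 \<partial>M3)"
      by simp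
  qed
  also have "\<dots> = (\<integral>\<^sup>+x. \<integral>\<^sup>+q. \<integral>\<^sup>+y. \<integral>\<^sup>+q'. G (x, q, y, q') \<partial>M4 \<partial>M3 \<partial>M2 \<partial>M1)"
  proof -
    have "(\<lambda>u. \<integral>\<^sup>+y. \<integral>\<^sup>+q'. G (fst u, snd u, y, q') \<partial>M4 \<partial>M3) \<in> borel_measurable (M1 \<Otimes>\<^sub>M M2)"
      by measurable
    from sigma_finite_measure.nn_integral_fst[OF assms(1) this] show ?thesis by simp
  qed
  finally show ?thesis .
qed

lemma nn_integral_pair_pair_rearrange:
  fixes G :: "'a \<times> 'b \<times> 'c \<times> 'd \<Rightarrow> ennreal"
  assumes "sigma_finite_measure M1" "sigma_finite_measure M2" "sigma_finite_measure M3"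
    "sigma_finite_measure M4"
    and [measurable]: "G \<in> borel_measurable (M1 \<Otimes>\<^sub>M (M2 \<Otimes>\<^sub>M (M3 \<Otimes>\<^sub>M M4)))"
  shows "(\<integral>\<^sup>+p. G (fst (fst p), snd (fst p), fst (snd p), snd (snd p)) \<partial>((M1 \<Otimes>\<^sub>M M2) \<Otimes>\<^sub>M (M3 \<Otimes>\<^sub>M M4))) =
    (\<integral>\<^sup>+w. \<integral>\<^sup>+z. G (fst z, fst w, snd z, snd w) \<partial>(M1 \<Otimes>\<^sub>M M3) \<partial>(M2 \<Otimes>\<^sub>M M4))"
proof -
  interpret M12: pair_sigma_finite M1 M2 using assms(1,2) by (simp add: pair_sigma_finite_def)
  interpret M14: pair_sigma_finite M1 M4 using assms(1,4) by (simp add: pair_sigma_finite_def)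
  interpret M34: pair_sigma_finite M3 M4 using assms(3,4) by (simp add: pair_sigma_finite_def)
  have "(\<integral>\<^sup>+x. \<integral>\<^sup>+q. \<integral>\<^sup>+y. \<integral>\<^sup>+q'. G (x, q, y, q') \<partial>M4 \<partial>M3 \<partial>M2 \<partial>M1) =
      (\<integral>\<^sup>+x. \<integral>\<^sup>+q. \<integral>\<^sup>+q'. \<integral>\<^sup>+y. G (x, q, y, q') \<partial>M3 \<partial>M4 \<partial>M2 \<partial>M1)"
  proof (intro nn_integral_cong)
    fix x q assume "x \<in> space M1" "q \<in> space M2"
    then have "(\<lambda>(y, q'). G (x, q, y, q')) \<in> borel_measurable (M3 \<Otimes>\<^sub>M M4)" by measurable
    from M34.Fubini'[OF this] show "(\<integral>\<^sup>+y. \<integral>\<^sup>+q'. G (x, q, y, q') \<partial>M4 \<partial>M3) =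
        (\<integral>\<^sup>+q'. \<integral>\<^sup>+y. G (x, q, y, q') \<partial>M3 \<partial>M4)"
      by simp
  qed
  also have "\<dots> = (\<integral>\<^sup>+q. \<integral>\<^sup>+x. \<integral>\<^sup>+q'. \<integral>\<^sup>+y. G (x, q, y, q') \<partial>M3 \<partial>M4 \<partial>M1 \<partial>M2)"
  proof -
    have "(\<lambda>(x, q). \<integral>\<^sup>+q'. \<integral>\<^sup>+y. G (x, q, y, q') \<partial>M3 \<partial>M4) \<in> borel_measurable (M1 \<Otimes>\<^sub>M M2)"
      by measurable
    from M12.Fubini'[OF this] show ?thesis by simp
  qed
  also have "\<dots> = (\<integral>\<^sup>+q. \<integral>\<^sup>+q'. \<integral>\<^sup>+x. \<integral>\<^sup>+y. G (x, q, y, q') \<partial>M3 \<partial>M1 \<partial>M4 \<partial>M2)"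
  proof (rule nn_integral_cong)
    fix q assume "q \<in> space M2"
    then have "(\<lambda>(x, q'). \<integral>\<^sup>+y. G (x, q, y, q') \<partial>M3) \<in> borel_measurable (M1 \<Otimes>\<^sub>M M4)" by measurable
    from M14.Fubini'[OF this] show "(\<integral>\<^sup>+x. \<integral>\<^sup>+q'. \<integral>\<^sup>+y. G (x, q, y, q') \<partial>M3 \<partial>M4 \<partial>M1) =
        (\<integral>\<^sup>+q'. \<integral>\<^sup>+x. \<integral>\<^sup>+y. G (x, q, y, q') \<partial>M3 \<partial>M1 \<partial>M4)"
      by simp
  qed
  also have "\<dots> = (\<integral>\<^sup>+p. G (fst (snd p), fst (fst p), snd (snd p), snd (fst p)) \<partial>((M2 \<Otimes>\<^sub>M M4) \<Otimes>\<^sub>M (M1 \<Otimes>\<^sub>M M3)))"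
  proof -
    have "(\<lambda>t. G (fst (snd (snd t)), fst t, snd (snd (snd t)), fst (snd t)))
        \<in> borel_measurable (M2 \<Otimes>\<^sub>M (M4 \<Otimes>\<^sub>M (M1 \<Otimes>\<^sub>M M3)))"
      by measurable
    from nn_integral_pair_pair[OF assms(4,1,3) this] show ?thesis by simp
  qed
  also have "\<dots> = (\<integral>\<^sup>+w. \<integral>\<^sup>+z. G (fst z, fst w, snd z, snd w) \<partial>(M1 \<Otimes>\<^sub>M M3) \<partial>(M2 \<Otimes>\<^sub>M M4))"
  proof -
    have "(\<lambda>p. G (fst (snd p), fst (fst p), snd (snd p), snd (fst p)))
        \<in> borel_measurable ((M2 \<Otimes>\<^sub>M M4) \<Otimes>\<^sub>M (M1 \<Otimes>\<^sub>M M3))"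
      by measurable
    from sigma_finite_measure.nn_integral_fst[OF sigma_finite_pair_measure[OF assms(1,3)] this]
    show ?thesis by simp
  qed
  finally show ?thesis
    using nn_integral_pair_pair[OF assms(2-5)] by simp
qed

lemma
  assumes "f \<in> borel_measurable M" "(\<integral>\<^sup>+x. f x \<partial>M) = ennreal c" "0 \<le> c"
  shows integrable_enn2real_of_nn_integral: "integrable M (\<lambda>x. enn2real (f x))"
    and integral_enn2real_of_nn_integral: "(\<integral>x. enn2real (f x) \<partial>M) = c"
proof -
  have "AE x in M. f x \<noteq> \<infinity>" using assms(1,2) by (intro nn_integral_PInf_AE) auto
  then have nn: "(\<integral>\<^sup>+x. ennreal (enn2real (f x)) \<partial>M) = ennreal c"
    unfolding assms(2)[symmetric]
    by (intro nn_integral_cong_AE) (auto simp: less_top[symmetric] elim!: eventually_mono)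
  show "integrable M (\<lambda>x. enn2real (f x))"
    using assms(1) by (intro integrableI_nn_integral_finite[OF _ _ nn]) auto
  show "(\<integral>x. enn2real (f x) \<partial>M) = c"
    using integral_eq_nn_integral[where M=M and f="\<lambda>x. enn2real (f x)"] nn assms(1,3) by simp
qed

lemma law_with_moment_distr_affine:
  assumes "law_with_moment \<alpha> \<mu>" "0 \<le> \<alpha>"
  shows "law_with_moment \<alpha> (distr \<mu> borel (\<lambda>x. a *\<^sub>R x + q))"
proof -
  note \<mu> = law_with_momentD[OF assms(1)]
  interpret prob_space \<mu> by (fact \<mu>(1))
  have [measurable]: "(\<lambda>x. a *\<^sub>R x + q) \<in> \<mu> \<rightarrow>\<^sub>M borel" using \<mu>(4) by measurable
  have "integrable \<mu> (\<lambda>x. norm (a *\<^sub>R x + q) powr \<alpha>)"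
  proof (rule Bochner_Integration.integrable_bound)
    show "integrable \<mu> (\<lambda>x. 2 powr \<alpha> * (\<bar>a\<bar> powr \<alpha> * norm x powr \<alpha> + norm q powr \<alpha>))"
      using \<mu>(3) by simp
    have "norm (a *\<^sub>R x - - q) powr \<alpha> \<le> 2 powr \<alpha> * (norm (a *\<^sub>R x) powr \<alpha> + norm (- q) powr \<alpha>)" for x
      by (rule norm_diff_powr_le[OF assms(2)])
    then show "AE x in \<mu>. norm (norm (a *\<^sub>R x + q) powr \<alpha>) \<le>
        norm (2 powr \<alpha> * (\<bar>a\<bar> powr \<alpha> * norm x powr \<alpha> + norm q powr \<alpha>))"
      by (intro AE_I2) (simp add: powr_mult)
  qed measurable
  then show ?thesis
    unfolding law_with_moment_def by (simp add: prob_space_distr integrable_distr_eq)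
qed

lemma equal_moments_upto_distr_affine:
  assumes "law_with_moment \<alpha> \<mu>" "law_with_moment \<alpha> \<nu>"
    and eq: "equal_moments_upto l \<mu> \<nu>" and "k \<le> l" "real k \<le> \<alpha>"
  shows "equal_moments_upto k (distr \<mu> borel (\<lambda>x. a *\<^sub>R x + q)) (distr \<nu> borel (\<lambda>x. a *\<^sub>R x + q))"
  unfolding equal_moments_upto_def
proof (intro allI impI conjI)
  fix \<beta> :: "'a \<Rightarrow> nat" assume "(\<Sum>b\<in>Basis. \<beta> b) \<le> k"
  then have p: "mpoly_deg_le k (monomial \<beta>)"
    by (intro mpoly_deg_le_mono[OF mpoly_deg_le_monomial]) (simp add: total_degree_def)
  have "0 \<le> \<alpha>" using assms(5) of_nat_0_le_iff order.trans by blast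
  have meas: "(\<lambda>x. a *\<^sub>R x + q) \<in> \<mu>' \<rightarrow>\<^sub>M borel" if "law_with_moment \<alpha> \<mu>'" for \<mu>'
    using law_with_momentD(4)[OF that] by measurable
  have int: "integrable \<mu>' (\<lambda>x. monomial \<beta> (a *\<^sub>R x + q))" if "law_with_moment \<alpha> \<mu>'" for \<mu>'
    using law_with_momentD(3)[OF law_with_moment_distr_affine[OF that \<open>0 \<le> \<alpha>\<close>, of a q]]
      law_with_momentD(1)[OF that] meas[OF that] assms(5)
    by (intro integrable_mpoly_comp[OF _ _ _ _ p]) (simp_all add: integrable_distr_eq)
  show "integrable (distr \<mu> borel (\<lambda>x. a *\<^sub>R x + q)) (monomial \<beta>)"
    "integrable (distr \<nu> borel (\<lambda>x. a *\<^sub>R x + q)) (monomial \<beta>)"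
    using int[OF assms(1)] int[OF assms(2)]
    by (simp_all add: integrable_distr_eq[OF meas[OF assms(1)]] integrable_distr_eq[OF meas[OF assms(2)]])
  show "(\<integral>x. monomial \<beta> x \<partial>distr \<mu> borel (\<lambda>x. a *\<^sub>R x + q)) =
      (\<integral>x. monomial \<beta> x \<partial>distr \<nu> borel (\<lambda>x. a *\<^sub>R x + q))"
    unfolding integral_distr[OF meas[OF assms(1)] borel_measurable_monomial]
      integral_distr[OF meas[OF assms(2)] borel_measurable_monomial]
    by (rule equal_moments_upto_integral_mpoly[OF eq \<open>k \<le> l\<close> mpoly_deg_le_compose_affine[OF p]])
qed

lemma energy_int_distr_affine:
  assumes "law_with_moment \<alpha> \<mu>" "law_with_moment \<alpha> \<nu>"
  shows "energy_int \<alpha> (distr \<mu> borel (\<lambda>x. a *\<^sub>R x + q)) (distr \<nu> borel (\<lambda>y. a *\<^sub>R y + q')) =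
    energy_int_map \<alpha> \<mu> (\<lambda>x. a *\<^sub>R x + q) \<nu> (\<lambda>y. a *\<^sub>R y + q')"
proof -
  note \<mu> = law_with_momentD[OF assms(1)] and \<nu> = law_with_momentD[OF assms(2)]
  have "(\<lambda>x. a *\<^sub>R x + q) \<in> \<mu> \<rightarrow>\<^sub>M borel" using \<mu>(4) by measurable
  moreover have "(\<lambda>y. a *\<^sub>R y + q') \<in> \<nu> \<rightarrow>\<^sub>M borel" using \<nu>(4) by measurable
  ultimately show ?thesis by (rule energy_int_distr[OF \<mu>(1) \<nu>(1)])
qed

lemma energy_sq_distr_affine:
  assumes "law_with_moment \<alpha> \<mu>" "law_with_moment \<alpha> \<nu>"
  shows "energy_sq \<alpha> (distr \<mu> borel (\<lambda>x. a *\<^sub>R x + q)) (distr \<nu> borel (\<lambda>x. a *\<^sub>R x + q)) =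
    \<bar>a\<bar> powr \<alpha> * energy_sq \<alpha> \<mu> \<nu>"
proof -
  have "energy_int \<alpha> (distr \<mu>' borel (\<lambda>x. a *\<^sub>R x + q)) (distr \<nu>' borel (\<lambda>x. a *\<^sub>R x + q)) =
      \<bar>a\<bar> powr \<alpha> * energy_int \<alpha> \<mu>' \<nu>'"
    if "law_with_moment \<alpha> \<mu>'" "law_with_moment \<alpha> \<nu>'" for \<mu>' \<nu>'
  proof -
    have "norm (a *\<^sub>R x + q - (a *\<^sub>R y + q)) powr \<alpha> = \<bar>a\<bar> powr \<alpha> * norm (x - y) powr \<alpha>" for x y :: 'a
      by (simp add: powr_mult scaleR_diff_right[symmetric])
    then show ?thesis
      unfolding energy_int_distr_affine[OF that]
      unfolding energy_int_map_def energy_int_def energy_kernel_def by simp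
  qed
  then show ?thesis
    unfolding energy_sq_def using assms by (simp add: algebra_simps)
qed

lemma energy_inner_distr_affine_le:
  assumes "0 < \<alpha>" "law_with_moment \<alpha> \<mu>" "law_with_moment \<alpha> \<nu>"
    "equal_moments_upto (nat \<lfloor>\<alpha> / 2\<rfloor>) \<mu> \<nu>"
  shows "energy_inner \<alpha> (distr \<mu> borel (\<lambda>x. a *\<^sub>R x + q)) (distr \<nu> borel (\<lambda>x. a *\<^sub>R x + q))
      (distr \<mu> borel (\<lambda>x. a *\<^sub>R x + q')) (distr \<nu> borel (\<lambda>x. a *\<^sub>R x + q'))
    \<le> \<bar>a\<bar> powr \<alpha> * energy_sq \<alpha> \<mu> \<nu>"
proof -
  have k: "real (nat \<lfloor>\<alpha> / 2\<rfloor>) \<le> \<alpha>" using assms(1) by linarith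
  note law = law_with_moment_distr_affine[OF assms(2)] law_with_moment_distr_affine[OF assms(3)]
  note eq = equal_moments_upto_distr_affine[OF assms(2,3,4) order.refl k]
  have "energy_inner \<alpha> (distr \<mu> borel (\<lambda>x. a *\<^sub>R x + q)) (distr \<nu> borel (\<lambda>x. a *\<^sub>R x + q))
      (distr \<mu> borel (\<lambda>x. a *\<^sub>R x + q')) (distr \<nu> borel (\<lambda>x. a *\<^sub>R x + q'))
    \<le> energy_dist \<alpha> (distr \<mu> borel (\<lambda>x. a *\<^sub>R x + q)) (distr \<nu> borel (\<lambda>x. a *\<^sub>R x + q)) *
      energy_dist \<alpha> (distr \<mu> borel (\<lambda>x. a *\<^sub>R x + q')) (distr \<nu> borel (\<lambda>x. a *\<^sub>R x + q'))"
    using assms(1) by (intro energy_inner_le law eq) simp_all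
  also have "\<dots> = \<bar>a\<bar> powr \<alpha> * energy_sq \<alpha> \<mu> \<nu>"
    unfolding energy_dist_def energy_sq_distr_affine[OF assms(2,3)]
    using energy_sq_nonneg[OF assms] by (simp add: real_sqrt_mult[symmetric])
  finally show ?thesis .
qed

text \<open>\<open>conv_comb_at lam \<mu> q\<close> is the law of \<open>sqrt lam X + sqrt (1 - lam) q\<close> for \<open>X \<sim> \<mu>\<close>, i.e. the
  conditional law of \<open>conv_comb lam \<mu> \<rho>\<close> given the second component \<open>q\<close>.\<close>
definition conv_comb_at :: "real \<Rightarrow> 'a::euclidean_space measure \<Rightarrow> 'a \<Rightarrow> 'a measure" where
  "conv_comb_at lam \<mu> q = distr \<mu> borel (\<lambda>x. sqrt lam *\<^sub>R x + sqrt (1 - lam) *\<^sub>R q)"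

lemma ennreal_energy_int_conv_comb:
  fixes \<mu> \<nu> \<rho> \<rho>' :: "'a::euclidean_space measure"
  assumes "law_with_moment \<alpha> \<mu>" "law_with_moment \<alpha> \<nu>" "law_with_moment \<alpha> \<rho>"
    "law_with_moment \<alpha> \<rho>'" "0 \<le> \<alpha>"
  shows "ennreal (energy_int \<alpha> (conv_comb lam \<mu> \<rho>) (conv_comb lam \<nu> \<rho>')) =
    (\<integral>\<^sup>+w. \<integral>\<^sup>+z. ennreal (norm (sqrt lam *\<^sub>R fst z + sqrt (1 - lam) *\<^sub>R fst w -
      (sqrt lam *\<^sub>R snd z + sqrt (1 - lam) *\<^sub>R snd w)) powr \<alpha>) \<partial>(\<mu> \<Otimes>\<^sub>M \<nu>) \<partial>(\<rho> \<Otimes>\<^sub>M \<rho>'))"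
proof -
  note \<mu> = law_with_momentD[OF assms(1)] and \<nu> = law_with_momentD[OF assms(2)]
    and \<rho> = law_with_momentD[OF assms(3)] and \<rho>' = law_with_momentD[OF assms(4)]
  have [measurable_cong]: "sets \<mu> = sets borel" "sets \<nu> = sets borel" "sets \<rho> = sets borel"
    "sets \<rho>' = sets borel" by fact+
  have [simp]: "prob_space (\<mu> \<Otimes>\<^sub>M \<rho>)" "prob_space (\<nu> \<Otimes>\<^sub>M \<rho>')"
    using \<mu>(1) \<nu>(1) \<rho>(1) \<rho>'(1) by (simp_all add: prob_space_pair)
  define h where "h = (\<lambda>z::'a \<times> 'a. sqrt lam *\<^sub>R fst z + sqrt (1 - lam) *\<^sub>R snd z)"
  define G :: "'a \<times> 'a \<times> 'a \<times> 'a \<Rightarrow> ennreal"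
    where "G = (\<lambda>t. ennreal (norm (sqrt lam *\<^sub>R fst t + sqrt (1 - lam) *\<^sub>R fst (snd t) -
      (sqrt lam *\<^sub>R fst (snd (snd t)) + sqrt (1 - lam) *\<^sub>R snd (snd (snd t)))) powr \<alpha>))"
  have "energy_int \<alpha> (conv_comb lam \<mu> \<rho>) (conv_comb lam \<nu> \<rho>') = energy_int_map \<alpha> (\<mu> \<Otimes>\<^sub>M \<rho>) h (\<nu> \<Otimes>\<^sub>M \<rho>') h"
    unfolding conv_comb_def' h_def by (rule energy_int_distr) simp_all
  moreover have "integrable ((\<mu> \<Otimes>\<^sub>M \<rho>) \<Otimes>\<^sub>M (\<nu> \<Otimes>\<^sub>M \<rho>')) (\<lambda>p. norm (h (fst p) - h (snd p)) powr \<alpha>)"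
    unfolding h_def
    using integrable_norm_powr_affine_pair[OF assms(1,3,5)] integrable_norm_powr_affine_pair[OF assms(2,4,5)]
    by (intro integrable_energy_int_map assms(5)) auto
  ultimately have "ennreal (energy_int \<alpha> (conv_comb lam \<mu> \<rho>) (conv_comb lam \<nu> \<rho>')) =
      (\<integral>\<^sup>+p. G (fst (fst p), snd (fst p), fst (snd p), snd (snd p)) \<partial>((\<mu> \<Otimes>\<^sub>M \<rho>) \<Otimes>\<^sub>M (\<nu> \<Otimes>\<^sub>M \<rho>')))"
    unfolding energy_int_map_def G_def h_def by (simp add: nn_integral_eq_integral)
  also have "\<dots> = (\<integral>\<^sup>+w. \<integral>\<^sup>+z. G (fst z, fst w, snd z, snd w) \<partial>(\<mu> \<Otimes>\<^sub>M \<nu>) \<partial>(\<rho> \<Otimes>\<^sub>M \<rho>'))"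
    by (rule nn_integral_pair_pair_rearrange) (auto simp: G_def prob_space_imp_sigma_finite \<mu>(1) \<nu>(1) \<rho>(1) \<rho>'(1))
  finally show ?thesis unfolding G_def by simp
qed

lemma
  fixes \<mu> \<nu> \<rho> \<rho>' :: "'a::euclidean_space measure"
  assumes "law_with_moment \<alpha> \<mu>" "law_with_moment \<alpha> \<nu>" "law_with_moment \<alpha> \<rho>"
    "law_with_moment \<alpha> \<rho>'" "0 \<le> \<alpha>"
  shows integrable_energy_int_conv_comb_at:
      "integrable (\<rho> \<Otimes>\<^sub>M \<rho>') (\<lambda>w. energy_int \<alpha> (conv_comb_at lam \<mu> (fst w)) (conv_comb_at lam \<nu> (snd w)))"
    and energy_int_conv_comb: "energy_int \<alpha> (conv_comb lam \<mu> \<rho>) (conv_comb lam \<nu> \<rho>') =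
      (\<integral>w. energy_int \<alpha> (conv_comb_at lam \<mu> (fst w)) (conv_comb_at lam \<nu> (snd w)) \<partial>(\<rho> \<Otimes>\<^sub>M \<rho>'))"
proof -
  note \<mu> = law_with_momentD[OF assms(1)] and \<nu> = law_with_momentD[OF assms(2)]
  have [measurable_cong]: "sets \<mu> = sets borel" "sets \<nu> = sets borel" by fact+
  interpret \<mu>\<nu>: pair_prob_space \<mu> \<nu>
    using \<mu>(1) \<nu>(1) by (simp add: pair_prob_space_def pair_sigma_finite_def prob_space_imp_sigma_finite)
  define K where "K = (\<lambda>w. \<integral>\<^sup>+z. ennreal (norm (sqrt lam *\<^sub>R fst z + sqrt (1 - lam) *\<^sub>R fst w -
      (sqrt lam *\<^sub>R snd z + sqrt (1 - lam) *\<^sub>R snd w)) powr \<alpha>) \<partial>(\<mu> \<Otimes>\<^sub>M \<nu>))"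
  have K_eq: "energy_int \<alpha> (conv_comb_at lam \<mu> (fst w)) (conv_comb_at lam \<nu> (snd w)) = enn2real (K w)" for w
    unfolding conv_comb_at_def energy_int_distr_affine[OF assms(1,2)] energy_int_map_def K_def
    by (subst integral_eq_nn_integral) auto
  have nonneg: "0 \<le> energy_int \<alpha> (conv_comb lam \<mu> \<rho>) (conv_comb lam \<nu> \<rho>')"
    unfolding energy_int_def energy_kernel_def by (rule integral_nonneg_AE) simp
  have K: "K \<in> borel_measurable (\<rho> \<Otimes>\<^sub>M \<rho>')"
    using law_with_momentD(4)[OF assms(3)] law_with_momentD(4)[OF assms(4)] unfolding K_def by measurable
  note nn = ennreal_energy_int_conv_comb[OF assms, of lam, folded K_def, symmetric]
  show "integrable (\<rho> \<Otimes>\<^sub>M \<rho>') (\<lambda>w. energy_int \<alpha> (conv_comb_at lam \<mu> (fst w)) (conv_comb_at lam \<nu> (snd w)))"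
    unfolding K_eq by (rule integrable_enn2real_of_nn_integral[OF K nn nonneg])
  show "energy_int \<alpha> (conv_comb lam \<mu> \<rho>) (conv_comb lam \<nu> \<rho>') =
      (\<integral>w. energy_int \<alpha> (conv_comb_at lam \<mu> (fst w)) (conv_comb_at lam \<nu> (snd w)) \<partial>(\<rho> \<Otimes>\<^sub>M \<rho>'))"
    unfolding K_eq by (rule integral_enn2real_of_nn_integral[OF K nn nonneg, symmetric])
qed

lemma
  fixes \<mu> \<nu> \<rho> :: "'a::euclidean_space measure"
  assumes "0 < \<alpha>" "law_with_moment \<alpha> \<mu>" "law_with_moment \<alpha> \<nu>" "law_with_moment \<alpha> \<rho>"
  shows integrable_energy_inner_conv_comb_at: "integrable (\<rho> \<Otimes>\<^sub>M \<rho>) (\<lambda>w. energy_inner \<alpha>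
      (conv_comb_at lam \<mu> (fst w)) (conv_comb_at lam \<nu> (fst w)) (conv_comb_at lam \<mu> (snd w)) (conv_comb_at lam \<nu> (snd w)))"
    and energy_sq_conv_comb_eq_integral: "energy_sq \<alpha> (conv_comb lam \<mu> \<rho>) (conv_comb lam \<nu> \<rho>) = (\<integral>w. energy_inner \<alpha>
      (conv_comb_at lam \<mu> (fst w)) (conv_comb_at lam \<nu> (fst w)) (conv_comb_at lam \<mu> (snd w)) (conv_comb_at lam \<nu> (snd w))
      \<partial>(\<rho> \<Otimes>\<^sub>M \<rho>))"
proof -
  have \<alpha>: "0 \<le> \<alpha>" using assms(1) by simp
  define K :: "'a measure \<Rightarrow> 'a measure \<Rightarrow> 'a \<times> 'a \<Rightarrow> real"
    where "K = (\<lambda>X Y w. energy_int \<alpha> (conv_comb_at lam X (fst w)) (conv_comb_at lam Y (snd w)))"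
  note int = integrable_energy_int_conv_comb_at[OF _ _ assms(4,4) \<alpha>, of _ _ lam]
  note eq = energy_int_conv_comb[OF _ _ assms(4,4) \<alpha>, of _ _ lam]
  have sym: "energy_int \<alpha> (conv_comb lam \<nu> \<rho>) (conv_comb lam \<mu> \<rho>) =
      energy_int \<alpha> (conv_comb lam \<mu> \<rho>) (conv_comb lam \<nu> \<rho>)"
    using law_with_momentD[OF law_with_moment_conv_comb[OF assms(2,4) \<alpha>]]
      law_with_momentD[OF law_with_moment_conv_comb[OF assms(3,4) \<alpha>]]
    by (intro energy_int_commute) auto
  show "integrable (\<rho> \<Otimes>\<^sub>M \<rho>) (\<lambda>w. energy_inner \<alpha>
      (conv_comb_at lam \<mu> (fst w)) (conv_comb_at lam \<nu> (fst w)) (conv_comb_at lam \<mu> (snd w)) (conv_comb_at lam \<nu> (snd w)))"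
    using int[OF assms(2,2)] int[OF assms(2,3)] int[OF assms(3,2)] int[OF assms(3,3)]
    unfolding energy_inner_def K_def by simp
  have "energy_sq \<alpha> (conv_comb lam \<mu> \<rho>) (conv_comb lam \<nu> \<rho>) = (-1) ^ nat \<lfloor>\<alpha> / 2\<rfloor> *
      (integral\<^sup>L (\<rho> \<Otimes>\<^sub>M \<rho>) (K \<mu> \<nu>) + integral\<^sup>L (\<rho> \<Otimes>\<^sub>M \<rho>) (K \<nu> \<mu>) -
       integral\<^sup>L (\<rho> \<Otimes>\<^sub>M \<rho>) (K \<mu> \<mu>) - integral\<^sup>L (\<rho> \<Otimes>\<^sub>M \<rho>) (K \<nu> \<nu>))"
    using eq[OF assms(2,3)] eq[OF assms(3,2)] sym
    unfolding energy_sq_def eq[OF assms(2,2)] eq[OF assms(3,3)] by (simp add: K_def)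
  also have "\<dots> = (\<integral>w. energy_inner \<alpha>
      (conv_comb_at lam \<mu> (fst w)) (conv_comb_at lam \<nu> (fst w)) (conv_comb_at lam \<mu> (snd w)) (conv_comb_at lam \<nu> (snd w))
      \<partial>(\<rho> \<Otimes>\<^sub>M \<rho>))"
    using int[OF assms(2,2)] int[OF assms(2,3)] int[OF assms(3,2)] int[OF assms(3,3)]
    unfolding energy_inner_def by (simp add: K_def algebra_simps)
  finally show "energy_sq \<alpha> (conv_comb lam \<mu> \<rho>) (conv_comb lam \<nu> \<rho>) = (\<integral>w. energy_inner \<alpha>
      (conv_comb_at lam \<mu> (fst w)) (conv_comb_at lam \<nu> (fst w)) (conv_comb_at lam \<mu> (snd w)) (conv_comb_at lam \<nu> (snd w))
      \<partial>(\<rho> \<Otimes>\<^sub>M \<rho>))" .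
qed

lemma energy_sq_conv_comb_le:
  fixes \<mu> \<nu> \<rho> :: "'a::euclidean_space measure"
  assumes "0 < \<alpha>" "0 \<le> lam" "law_with_moment \<alpha> \<mu>" "law_with_moment \<alpha> \<nu>" "law_with_moment \<alpha> \<rho>"
    "equal_moments_upto (nat \<lfloor>\<alpha> / 2\<rfloor>) \<mu> \<nu>"
  shows "energy_sq \<alpha> (conv_comb lam \<mu> \<rho>) (conv_comb lam \<nu> \<rho>) \<le> lam powr (\<alpha> / 2) * energy_sq \<alpha> \<mu> \<nu>"
proof -
  interpret \<rho>\<rho>: prob_space "\<rho> \<Otimes>\<^sub>M \<rho>"
    using law_with_momentD(1)[OF assms(5)] by (simp add: prob_space_pair)
  have lam: "\<bar>sqrt lam\<bar> powr \<alpha> = lam powr (\<alpha> / 2)"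
    using assms(2) by (simp add: powr_half_sqrt[symmetric] powr_powr)
  have "energy_sq \<alpha> (conv_comb lam \<mu> \<rho>) (conv_comb lam \<nu> \<rho>) \<le> (\<integral>w. lam powr (\<alpha> / 2) * energy_sq \<alpha> \<mu> \<nu> \<partial>(\<rho> \<Otimes>\<^sub>M \<rho>))"
    unfolding energy_sq_conv_comb_eq_integral[OF assms(1,3,4,5)]
  proof (rule integral_mono[OF integrable_energy_inner_conv_comb_at[OF assms(1,3,4,5)]])
    show "energy_inner \<alpha> (conv_comb_at lam \<mu> (fst w)) (conv_comb_at lam \<nu> (fst w))
        (conv_comb_at lam \<mu> (snd w)) (conv_comb_at lam \<nu> (snd w)) \<le> lam powr (\<alpha> / 2) * energy_sq \<alpha> \<mu> \<nu>" for w
      unfolding conv_comb_at_def lam[symmetric] by (rule energy_inner_distr_affine_le[OF assms(1,3,4,6)])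
  qed simp
  then show ?thesis by (simp add: \<rho>\<rho>.prob_space)
qed

lemma energy_dist_conv_comb_left_le:
  assumes "2 \<le> \<alpha>" "0 \<le> lam" "lam \<le> 1"
    "law_with_moment \<alpha> \<mu>" "law_with_moment \<alpha> \<nu>" "law_with_moment \<alpha> \<rho>"
    "equal_moments_upto (nat \<lfloor>\<alpha> / 2\<rfloor>) \<mu> \<nu>"
  shows "energy_dist \<alpha> (conv_comb lam \<mu> \<rho>) (conv_comb lam \<nu> \<rho>) \<le> sqrt lam * energy_dist \<alpha> \<mu> \<nu>"
proof -
  have \<alpha>: "0 < \<alpha>" using assms(1) by simp
  have "energy_dist \<alpha> (conv_comb lam \<mu> \<rho>) (conv_comb lam \<nu> \<rho>) \<le> sqrt (lam powr (\<alpha> / 2) * energy_sq \<alpha> \<mu> \<nu>)"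
    unfolding energy_dist_def
    by (intro real_sqrt_le_mono energy_sq_conv_comb_le[OF \<alpha> assms(2,4,5,6,7)])
  also have "\<dots> = lam powr (\<alpha> / 4) * energy_dist \<alpha> \<mu> \<nu>"
    using assms(2) by (simp add: energy_dist_def real_sqrt_mult powr_half_sqrt[symmetric] powr_powr)
  also have "\<dots> \<le> lam powr (1 / 2) * energy_dist \<alpha> \<mu> \<nu>"
    using assms energy_sq_nonneg[OF \<alpha> assms(4,5,7)] unfolding energy_dist_def
    by (intro mult_right_mono powr_mono') auto
  finally show ?thesis using assms(2) by (simp add: powr_half_sqrt)
qed

lemma equal_moments_upto_conv_comb_right:
  assumes "law_with_moment \<alpha> \<mu>" "law_with_moment \<alpha> \<nu>" "law_with_moment \<alpha> \<rho>"
    and "equal_moments_upto l \<mu> \<nu>" "k \<le> l" "real k \<le> \<alpha>"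
  shows "equal_moments_upto k (conv_comb lam \<rho> \<mu>) (conv_comb lam \<rho> \<nu>)"
proof -
  note \<mu> = law_with_momentD[OF assms(1)] and \<nu> = law_with_momentD[OF assms(2)]
    and \<rho> = law_with_momentD[OF assms(3)]
  show ?thesis
    unfolding conv_comb_commute[OF \<rho>(1) \<mu>(1) \<rho>(2) \<mu>(2)] conv_comb_commute[OF \<rho>(1) \<nu>(1) \<rho>(2) \<nu>(2)]
    by (rule equal_moments_upto_conv_comb_left[OF assms])
qed

lemma energy_dist_conv_comb_right_le:
  assumes "2 \<le> \<alpha>" "0 \<le> lam" "lam \<le> 1"
    "law_with_moment \<alpha> \<mu>" "law_with_moment \<alpha> \<nu>" "law_with_moment \<alpha> \<rho>"
    "equal_moments_upto (nat \<lfloor>\<alpha> / 2\<rfloor>) \<mu> \<nu>"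
  shows "energy_dist \<alpha> (conv_comb lam \<rho> \<mu>) (conv_comb lam \<rho> \<nu>) \<le> sqrt (1 - lam) * energy_dist \<alpha> \<mu> \<nu>"
proof -
  note \<mu> = law_with_momentD[OF assms(4)] and \<nu> = law_with_momentD[OF assms(5)]
    and \<rho> = law_with_momentD[OF assms(6)]
  show ?thesis
    unfolding conv_comb_commute[OF \<rho>(1) \<mu>(1) \<rho>(2) \<mu>(2)] conv_comb_commute[OF \<rho>(1) \<nu>(1) \<rho>(2) \<nu>(2)]
    using assms(2,3) by (intro energy_dist_conv_comb_left_le assms(1,4-7)) simp_all
qed

lemma integrable_norm_powr_of_energy_kernel:
  fixes \<mu> :: "'a::euclidean_space measure"
  assumes "prob_space \<mu>" "sets \<mu> = sets borel" "0 \<le> \<alpha>"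
    and "integrable (\<mu> \<Otimes>\<^sub>M \<mu>) (energy_kernel \<alpha>)"
  shows "integrable \<mu> (\<lambda>x. norm x powr \<alpha>)"
proof -
  interpret prob_space \<mu> by fact
  interpret pair_prob_space \<mu> \<mu> by unfold_locales
  have [measurable]: "(\<lambda>x. x) \<in> borel_measurable \<mu>" using assms(2) by (rule measurable_ident_sets)
  have "\<exists>x. integrable \<mu> (\<lambda>y. energy_kernel \<alpha> (x, y))"
  proof (rule ccontr)
    assume "\<nexists>x. integrable \<mu> (\<lambda>y. energy_kernel \<alpha> (x, y))"
    with AE_integrable_fst'[OF assms(4)] have "AE x in \<mu>. False" by simp
    then show False by simp
  qed
  then obtain x0 where x0: "integrable \<mu> (\<lambda>y. norm (x0 - y) powr \<alpha>)"
    unfolding energy_kernel_def by auto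
  show ?thesis
  proof (rule Bochner_Integration.integrable_bound)
    show "integrable \<mu> (\<lambda>y. 2 powr \<alpha> * (norm x0 powr \<alpha> + norm (x0 - y) powr \<alpha>))"
      using x0 by simp
    have "norm (x0 - (x0 - y)) powr \<alpha> \<le> 2 powr \<alpha> * (norm x0 powr \<alpha> + norm (x0 - y) powr \<alpha>)" for y
      by (rule norm_diff_powr_le[OF assms(3)])
    then show "AE y in \<mu>. norm (norm y powr \<alpha>) \<le> norm (2 powr \<alpha> * (norm x0 powr \<alpha> + norm (x0 - y) powr \<alpha>))"
      by (intro AE_I2) simp
  qed measurable
qed

lemma energy_well_definedD:
  assumes "energy_well_defined \<alpha> \<mu> \<nu>" "0 \<le> \<alpha>"
  shows "law_with_moment \<alpha> \<mu>" "law_with_moment \<alpha> \<nu>"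
    "equal_moments_upto (nat \<lfloor>\<alpha> / 2\<rfloor>) \<mu> \<nu>"
proof -
  obtain l where "nat \<lfloor>\<alpha> / 2\<rfloor> \<le> l" "equal_moments_upto l \<mu> \<nu>"
    using assms(1) unfolding energy_well_defined_def by blast
  then show "equal_moments_upto (nat \<lfloor>\<alpha> / 2\<rfloor>) \<mu> \<nu>"
    unfolding equal_moments_upto_def using le_trans by blast
  show "law_with_moment \<alpha> \<mu>" "law_with_moment \<alpha> \<nu>"
    using assms integrable_norm_powr_of_energy_kernel[of \<mu> \<alpha>] integrable_norm_powr_of_energy_kernel[of \<nu> \<alpha>]
    unfolding energy_well_defined_def law_with_moment_def by blast+
qed

theorem mainTheorem4:
  fixes \<alpha> lam :: real and \<mu>1 \<mu>2 \<nu>1 \<nu>2 :: "'a::euclidean_space measure"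
  assumes "\<alpha> \<ge> 4" and "0 < lam" and "lam < 1"
    and "energy_well_defined \<alpha> \<mu>1 \<nu>1"
    and "energy_well_defined \<alpha> \<mu>2 \<nu>2"
    and "energy_well_defined \<alpha> (conv_comb lam \<mu>1 \<mu>2) (conv_comb lam \<nu>1 \<nu>2)"
  shows "energy_dist \<alpha> (conv_comb lam \<mu>1 \<mu>2) (conv_comb lam \<nu>1 \<nu>2)
           \<le> sqrt lam * energy_dist \<alpha> \<mu>1 \<nu>1 + sqrt (1 - lam) * energy_dist \<alpha> \<mu>2 \<nu>2"
proof -
  have \<alpha>: "0 < \<alpha>" "0 \<le> \<alpha>" "2 \<le> \<alpha>" using assms(1) by simp_all
  have k: "real (nat \<lfloor>\<alpha> / 2\<rfloor>) \<le> \<alpha>" using \<alpha>(1) by linarith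
  note \<mu>\<nu>1 = energy_well_definedD[OF assms(4) \<alpha>(2)] and \<mu>\<nu>2 = energy_well_definedD[OF assms(5) \<alpha>(2)]
  let ?C = "conv_comb lam \<nu>1 \<mu>2"
  have "energy_dist \<alpha> (conv_comb lam \<mu>1 \<mu>2) (conv_comb lam \<nu>1 \<nu>2) \<le>
      energy_dist \<alpha> (conv_comb lam \<mu>1 \<mu>2) ?C + energy_dist \<alpha> ?C (conv_comb lam \<nu>1 \<nu>2)"
    using equal_moments_upto_conv_comb_left[OF \<mu>\<nu>1(1,2) \<mu>\<nu>2(1) \<mu>\<nu>1(3) order.refl k]
      equal_moments_upto_conv_comb_right[OF \<mu>\<nu>2(1,2) \<mu>\<nu>1(2) \<mu>\<nu>2(3) order.refl k]
    by (intro energy_dist_triangle \<alpha>(1) law_with_moment_conv_comb \<mu>\<nu>1(1,2) \<mu>\<nu>2(1,2) \<alpha>(2))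
  moreover have "energy_dist \<alpha> (conv_comb lam \<mu>1 \<mu>2) ?C \<le> sqrt lam * energy_dist \<alpha> \<mu>1 \<nu>1"
    using assms(2,3) by (intro energy_dist_conv_comb_left_le \<alpha>(3) \<mu>\<nu>1 \<mu>\<nu>2(1)) simp_all
  moreover have "energy_dist \<alpha> ?C (conv_comb lam \<nu>1 \<nu>2) \<le> sqrt (1 - lam) * energy_dist \<alpha> \<mu>2 \<nu>2"
    using assms(2,3) by (intro energy_dist_conv_comb_right_le \<alpha>(3) \<mu>\<nu>2 \<mu>\<nu>1(2)) simp_all
  ultimately show ?thesis by linarith
qed

end
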